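(* Let $q\in K$. The linear map $\theta_q:\mathcal{H}_{\mathbb{T}}\to\mathcal{H}_{\mathcal{SP}}$, $\theta_q(\mathcal{T})=q^{c(\mathcal{T})}\,\overline{\mathcal{T}}$, is a surjective morphism of Hopf 2-associative algebras; that is, $\theta_q$ is surjective, $\theta_q(1)=1$, $\theta_q(x.y)=\theta_q(x).\theta_q(y)$, $\theta_q(x\downarrow y)=\theta_q(x)\downarrow\theta_q(y)$, and $\Delta\circ\theta_q=(\theta_q\otimes\theta_q)\circ\Delta$.
   Context: Let $K$ be a field. For $n\geq0$, $[n]=\{1,\ldots,n\}$, $\mathbb{T}_n$ is the set of topologies on $[n]$ and $\mathcal{H}_{\mathbb{T}}$ is the $K$-vector space with basis $\bigsqcup_n\mathbb{T}_n$; $1$ denotes the empty topology. For a topology $\mathcal{T}$ on finite $X$: $i\leq_{\mathcal{T}}j$ iff every open set containing $i$ contains $j$ (the open sets are exactly the subsets $I$ with $i\in I, i\leq_{\mathcal{T}}j\Rightarrow j\in I$); $i\sim_{\mathcal{T}}j$ iff $i\leq_{\mathcal{T}}j$ and $j\leq_{\mathcal{T}}i$. For $Y\subseteq X$, $\mathcal{T}_{\mid Y}=\{O\cap Y\mid O\in\mathcal{T}\}$; if $X$ is totally ordered of size $m$, $\mathrm{Std}(\mathcal{T})\in\mathbb{T}_m$ is the transport of $\mathcal{T}$ along the increasing bijection $X\to[m]$. For $O\subseteq\mathbb{N}$, $O(+n)=\{k+n\mid k\in O\}$. Products on $\mathcal{H}_{\mathbb{T}}$ (bilinear): for $\mathcal{T}\in\mathbb{T}_n,\mathcal{T}'\in\mathbb{T}_{n'}$,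 $\mathcal{T}.\mathcal{T}'$ has open sets $O\sqcup O'(+n)$, and $\mathcal{T}\downarrow\mathcal{T}'$ has open sets $O\sqcup[n'](+n)$ and $O'(+n)$ ($O\in\mathcal{T},O'\in\mathcal{T}'$). Coproduct: $\Delta(\mathcal{T})=\sum_{O\in\mathcal{T}}\mathrm{Std}(\mathcal{T}_{\mid[n]\setminus O})\otimes\mathrm{Std}(\mathcal{T}_{\mid O})$. A topology is $T_0$ if $\sim_{\mathcal{T}}$ is equality. $\mathcal{H}_{\mathcal{SP}}$ is the subspace of $\mathcal{H}_{\mathbb{T}}$ spanned by $T_0$ topologies; it is stable under $.$, $\downarrow$ and $\Delta$. For $\mathcal{T}\in\mathbb{T}_n$ with $\sim_{\mathcal{T}}$-classes $C_1,\ldots,C_k$ numbered so that $\min C_1<\cdots<\min C_k$, $\overline{\mathcal{T}}$ is the $T_0$ topology on $[k]$ whose preorder is $a\leq b$ iff $x\leq_{\mathcal{T}}y$ for $x\in C_a,y\in C_b$; and $c(\mathcal{T})=n-k$. Convention $q^0=1$ (also for $q=0$). *)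

theory Defs
  imports Main "HOL-Library.Poly_Mapping"
begin

text \<open>A basis element of H_T is a pair (n, T) with T a topology on [n] = {1..n}.\<close>
type_synonym topo = "nat \<times> nat set set"

definition is_top :: "nat \<Rightarrow> nat set set \<Rightarrow> bool" where
  "is_top n T \<longleftrightarrow> T \<subseteq> Pow {1..n} \<and> {} \<in> T \<and> {1..n} \<in> T \<and>
     (\<forall>A\<in>T. \<forall>B\<in>T. A \<union> B \<in> T \<and> A \<inter> B \<in> T)"

definition topologies :: "topo set" where
  "topologies = {(n, T). is_top n T}"

definition tle :: "nat set set \<Rightarrow> nat \<Rightarrow> nat \<Rightarrow> bool" where
  "tle T i j \<longleftrightarrow> (\<forall>U\<in>T. i \<in> U \<longrightarrow> j \<in> U)"

definition tequiv :: "nat set set \<Rightarrow> nat \<Rightarrow> nat \<Rightarrow> bool" where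
  "tequiv T i j \<longleftrightarrow> tle T i j \<and> tle T j i"

definition is_T0 :: "topo \<Rightarrow> bool" where
  "is_T0 t \<longleftrightarrow> (\<forall>i\<in>{1..fst t}. \<forall>j\<in>{1..fst t}. tequiv (snd t) i j \<longrightarrow> i = j)"

definition T0_topologies :: "topo set" where
  "T0_topologies = {t \<in> topologies. is_T0 t}"

definition H_T :: "(topo \<Rightarrow>\<^sub>0 'k::field) set" where
  "H_T = {x. Poly_Mapping.keys x \<subseteq> topologies}"

definition H_SP :: "(topo \<Rightarrow>\<^sub>0 'k::field) set" where
  "H_SP = {x. Poly_Mapping.keys x \<subseteq> T0_topologies}"

text \<open>Tensor square H_T \<otimes> H_T, with basis the pairs of basis elements.\<close>
definition H_T2 :: "(topo \<times> topo \<Rightarrow>\<^sub>0 'k::field) set" where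
  "H_T2 = {x. Poly_Mapping.keys x \<subseteq> topologies \<times> topologies}"

definition one_T :: "topo \<Rightarrow>\<^sub>0 'k::field" where
  "one_T = Poly_Mapping.single (0, {{}}) 1"

definition conc_top :: "topo \<Rightarrow> topo \<Rightarrow> topo" where
  "conc_top t t' = (fst t + fst t',
     {U \<union> (\<lambda>k. k + fst t) ` U' | U U'. U \<in> snd t \<and> U' \<in> snd t'})"

definition down_top :: "topo \<Rightarrow> topo \<Rightarrow> topo" where
  "down_top t t' = (fst t + fst t',
     {U \<union> (\<lambda>k. k + fst t) ` {1..fst t'} | U. U \<in> snd t} \<union>
     {(\<lambda>k. k + fst t) ` U' | U'. U' \<in> snd t'})"

definition bilin :: "(topo \<Rightarrow> topo \<Rightarrow> topo) \<Rightarrow> (topo \<Rightarrow>\<^sub>0 'k::field) \<Rightarrow> (topo \<Rightarrow>\<^sub>0 'k) \<Rightarrow> (topo \<Rightarrow>\<^sub>0 'k)" where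
  "bilin f x y = (\<Sum>a\<in>Poly_Mapping.keys x. \<Sum>b\<in>Poly_Mapping.keys y. Poly_Mapping.single (f a b) (Poly_Mapping.lookup x a * Poly_Mapping.lookup y b))"

definition conc_prod :: "(topo \<Rightarrow>\<^sub>0 'k::field) \<Rightarrow> (topo \<Rightarrow>\<^sub>0 'k) \<Rightarrow> (topo \<Rightarrow>\<^sub>0 'k)" where
  "conc_prod = bilin conc_top"

definition down_prod :: "(topo \<Rightarrow>\<^sub>0 'k::field) \<Rightarrow> (topo \<Rightarrow>\<^sub>0 'k) \<Rightarrow> (topo \<Rightarrow>\<^sub>0 'k)" where
  "down_prod = bilin down_top"

text \<open>Std(T restricted to Y), Y \<subseteq> [n], via the increasing bijection Y \<rightarrow> [card Y].\<close>
definition rank_in :: "nat set \<Rightarrow> nat \<Rightarrow> nat" where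
  "rank_in Y y = card {z \<in> Y. z \<le> y}"

definition std_restr :: "nat set set \<Rightarrow> nat set \<Rightarrow> topo" where
  "std_restr T Y = (card Y, {rank_in Y ` U | U. U \<in> {W \<inter> Y | W. W \<in> T}})"

definition coprod :: "(topo \<Rightarrow>\<^sub>0 'k::field) \<Rightarrow> (topo \<times> topo \<Rightarrow>\<^sub>0 'k)" where
  "coprod x = (\<Sum>a\<in>Poly_Mapping.keys x. \<Sum>U\<in>snd a.
     Poly_Mapping.single (std_restr (snd a) ({1..fst a} - U), std_restr (snd a) U) (Poly_Mapping.lookup x a))"

text \<open>Quotient T0 topology: classes numbered by increasing minima.\<close>
definition tclass :: "topo \<Rightarrow> nat \<Rightarrow> nat set" where
  "tclass t i = {j \<in> {1..fst t}. tequiv (snd t) i j}"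

definition class_mins :: "topo \<Rightarrow> nat set" where
  "class_mins t = {Min (tclass t i) | i. i \<in> {1..fst t}}"

definition nclasses :: "topo \<Rightarrow> nat" where
  "nclasses t = card (class_mins t)"

definition class_idx :: "topo \<Rightarrow> nat \<Rightarrow> nat" where
  "class_idx t i = card {r \<in> class_mins t. r \<le> Min (tclass t i)}"

definition bar_le :: "topo \<Rightarrow> nat \<Rightarrow> nat \<Rightarrow> bool" where
  "bar_le t a b \<longleftrightarrow> (\<forall>x\<in>{1..fst t}. \<forall>y\<in>{1..fst t}.
      class_idx t x = a \<longrightarrow> class_idx t y = b \<longrightarrow> tle (snd t) x y)"

definition bar_top :: "topo \<Rightarrow> topo" where
  "bar_top t = (nclasses t,
     {I. I \<subseteq> {1..nclasses t} \<and> (\<forall>a\<in>I. \<forall>b\<in>{1..nclasses t}. bar_le t a b \<longrightarrow> b \<in> I)})"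

definition cdef :: "topo \<Rightarrow> nat" where
  "cdef t = fst t - nclasses t"

definition theta :: "'k::field \<Rightarrow> (topo \<Rightarrow>\<^sub>0 'k) \<Rightarrow> (topo \<Rightarrow>\<^sub>0 'k)" where
  "theta q x = (\<Sum>a\<in>Poly_Mapping.keys x. Poly_Mapping.single (bar_top a) (Poly_Mapping.lookup x a * q ^ cdef a))"

definition theta2 :: "'k::field \<Rightarrow> (topo \<times> topo \<Rightarrow>\<^sub>0 'k) \<Rightarrow> (topo \<times> topo \<Rightarrow>\<^sub>0 'k)" where
  "theta2 q z = (\<Sum>p\<in>Poly_Mapping.keys z. Poly_Mapping.single (bar_top (fst p), bar_top (snd p))
       (Poly_Mapping.lookup z p * q ^ cdef (fst p) * q ^ cdef (snd p)))"

end

theory Submission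
  imports Defs
begin

text \<open>A finite topology is the same as a preorder, its open sets being the up-sets. The map theta
  collapses every class of the associated equivalence to a point. Concatenation and the down
  product act blockwise, so the classes of a product are those of the factors; and the
  restrictions in the coproduct are to open sets and their complements, which are unions of
  classes. Hence collapsing commutes with both products and with every term of the coproduct,
  while the number c of collapsed points is additive in each case. Since theta fixes T0
  topologies, it maps H_T onto H_SP.\<close>

section \<open>Linear extension of maps defined on basis elements\<close>

definition lin_ext :: "('a \<Rightarrow> 'k::comm_monoid_add \<Rightarrow> 'b::comm_monoid_add) \<Rightarrow> ('a \<Rightarrow>\<^sub>0 'k) \<Rightarrow> 'b" where
  "lin_ext F x = (\<Sum>a\<in>Poly_Mapping.keys x. F a (Poly_Mapping.lookup x a))"

definition coeff_additive :: "('a \<Rightarrow> 'k::comm_monoid_add \<Rightarrow> 'b::comm_monoid_add) \<Rightarrow> bool" where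
  "coeff_additive F \<longleftrightarrow> (\<forall>a c d. F a (c + d) = F a c + F a d)"

lemma coeff_additive_zero:
  fixes F :: "'a \<Rightarrow> 'k::comm_monoid_add \<Rightarrow> 'b::cancel_comm_monoid_add"
  shows "coeff_additive F \<Longrightarrow> F a 0 = 0"
  unfolding coeff_additive_def by (metis add.right_neutral add_left_cancel)

lemma lin_ext_superset:
  fixes F :: "'a \<Rightarrow> 'k::comm_monoid_add \<Rightarrow> 'b::cancel_comm_monoid_add"
  assumes "finite S" "Poly_Mapping.keys x \<subseteq> S" "coeff_additive F"
  shows "lin_ext F x = (\<Sum>a\<in>S. F a (Poly_Mapping.lookup x a))"
  unfolding lin_ext_def
  by (rule sum.mono_neutral_left) (use assms coeff_additive_zero in \<open>auto simp: in_keys_iff\<close>)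

lemma lin_ext_add:
  fixes F :: "'a \<Rightarrow> 'k::comm_monoid_add \<Rightarrow> 'b::cancel_comm_monoid_add"
  assumes "coeff_additive F"
  shows "lin_ext F (x + y) = lin_ext F x + lin_ext F y"
proof -
  let ?S = "Poly_Mapping.keys x \<union> Poly_Mapping.keys y \<union> Poly_Mapping.keys (x + y)"
  have "lin_ext F (x + y) = (\<Sum>a\<in>?S. F a (Poly_Mapping.lookup (x + y) a))"
    by (rule lin_ext_superset) (use assms in auto)
  also have "\<dots> = (\<Sum>a\<in>?S. F a (Poly_Mapping.lookup x a)) + (\<Sum>a\<in>?S. F a (Poly_Mapping.lookup y a))"
    using assms by (simp add: lookup_add coeff_additive_def sum.distrib)
  also have "\<dots> = lin_ext F x + lin_ext F y"
    by (subst (1 2) lin_ext_superset[of ?S]) (use assms in auto)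
  finally show ?thesis .
qed

lemma lin_ext_zero [simp]: "lin_ext F 0 = 0"
  by (simp add: lin_ext_def)

lemma lin_ext_single:
  fixes F :: "'a \<Rightarrow> 'k::comm_monoid_add \<Rightarrow> 'b::cancel_comm_monoid_add"
  shows "coeff_additive F \<Longrightarrow> lin_ext F (Poly_Mapping.single a c) = F a c"
  by (subst lin_ext_superset[of "{a}"]) auto

lemma lin_ext_sum:
  fixes F :: "'a \<Rightarrow> 'k::comm_monoid_add \<Rightarrow> 'b::cancel_comm_monoid_add"
  assumes "coeff_additive F"
  shows "lin_ext F (\<Sum>i\<in>I. g i) = (\<Sum>i\<in>I. lin_ext F (g i))"
  by (induction I rule: infinite_finite_induct) (simp_all add: lin_ext_add[OF assms])

lemma coeff_additive_single_scaled:
  fixes w :: "'a \<Rightarrow> 'k::semiring_0"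
  shows "coeff_additive (\<lambda>a c. Poly_Mapping.single (g a) (c * w a))"
  by (simp add: coeff_additive_def distrib_right single_add)

lemma sum_single_lookup:
  "(\<Sum>a\<in>Poly_Mapping.keys x. Poly_Mapping.single a (Poly_Mapping.lookup x a)) = x"
proof (rule poly_mapping_eqI)
  fix b
  have "Poly_Mapping.lookup (\<Sum>a\<in>Poly_Mapping.keys x. Poly_Mapping.single a (Poly_Mapping.lookup x a)) b
      = (\<Sum>a\<in>Poly_Mapping.keys x. if a = b then Poly_Mapping.lookup x a else 0)"
    unfolding lookup_sum by (rule sum.cong) (auto simp: lookup_single when_def)
  also have "\<dots> = Poly_Mapping.lookup x b"
    by (simp add: in_keys_iff)
  finally show "Poly_Mapping.lookup (\<Sum>a\<in>Poly_Mapping.keys x. Poly_Mapping.single a (Poly_Mapping.lookup x a)) b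
      = Poly_Mapping.lookup x b" .
qed

lemma theta_eq_lin_ext: "theta q = lin_ext (\<lambda>a c. Poly_Mapping.single (bar_top a) (c * q ^ cdef a))"
  by (simp add: fun_eq_iff theta_def lin_ext_def)

lemma theta2_eq_lin_ext:
  "theta2 q = lin_ext (\<lambda>p c. Poly_Mapping.single (bar_top (fst p), bar_top (snd p))
     (c * (q ^ cdef (fst p) * q ^ cdef (snd p))))"
  by (simp add: fun_eq_iff theta2_def lin_ext_def mult.assoc)

definition coprod_basis :: "topo \<Rightarrow> 'k::comm_monoid_add \<Rightarrow> (topo \<times> topo \<Rightarrow>\<^sub>0 'k)" where
  "coprod_basis a c = (\<Sum>U\<in>snd a.
     Poly_Mapping.single (std_restr (snd a) ({1..fst a} - U), std_restr (snd a) U) c)"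

lemma coprod_eq_lin_ext: "coprod = lin_ext coprod_basis"
  by (simp add: fun_eq_iff coprod_def coprod_basis_def lin_ext_def)

lemma coeff_additive_coprod_basis: "coeff_additive coprod_basis"
  by (simp add: coeff_additive_def coprod_basis_def single_add sum.distrib)

lemma bilin_eq_lin_ext:
  "bilin h x y = lin_ext (\<lambda>a c. lin_ext (\<lambda>b d. Poly_Mapping.single (h a b) (c * d)) y) x"
  by (simp add: bilin_def lin_ext_def)

lemma bilin_add_left: "bilin h (x + x') y = bilin h x y + bilin h x' y"
proof -
  have "coeff_additive (\<lambda>a c. lin_ext (\<lambda>b d. Poly_Mapping.single (h a b) (c * d)) y)"
    by (simp add: coeff_additive_def lin_ext_def distrib_right single_add sum.distrib)
  then show ?thesis
    unfolding bilin_eq_lin_ext by (rule lin_ext_add)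
qed

lemma bilin_add_right:
  fixes x y y' :: "topo \<Rightarrow>\<^sub>0 'k::field"
  shows "bilin h x (y + y') = bilin h x y + bilin h x y'"
proof -
  have "coeff_additive (\<lambda>b d. Poly_Mapping.single (h a b) (c * d))" for a and c :: 'k
    by (simp add: coeff_additive_def distrib_left single_add)
  then have "lin_ext (\<lambda>b d. Poly_Mapping.single (h a b) (c * d)) (y + y')
      = lin_ext (\<lambda>b d. Poly_Mapping.single (h a b) (c * d)) y
      + lin_ext (\<lambda>b d. Poly_Mapping.single (h a b) (c * d)) y'" for a c
    by (rule lin_ext_add)
  then show ?thesis
    unfolding bilin_eq_lin_ext by (simp add: lin_ext_def[of _ x] sum.distrib)
qed

lemma bilin_zero_left [simp]: "bilin h 0 y = 0"
  by (simp add: bilin_def)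

lemma bilin_zero_right [simp]: "bilin h x 0 = 0"
  by (simp add: bilin_def)

lemma bilin_sum_left: "bilin h (\<Sum>i\<in>I. g i) y = (\<Sum>i\<in>I. bilin h (g i) y)"
  by (induction I rule: infinite_finite_induct) (simp_all add: bilin_add_left)

lemma bilin_sum_right: "bilin h x (\<Sum>i\<in>I. g i) = (\<Sum>i\<in>I. bilin h x (g i))"
  by (induction I rule: infinite_finite_induct) (simp_all add: bilin_add_right)

lemma bilin_single:
  "bilin h (Poly_Mapping.single a c) (Poly_Mapping.single b d) = Poly_Mapping.single (h a b) (c * d)"
  by (cases "c = 0"; cases "d = 0") (simp_all add: bilin_def)

section \<open>Finite topologies as preorders\<close>

lemma is_topI:
  assumes "T \<subseteq> Pow {1..n}" "{} \<in> T" "{1..n} \<in> T"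
    and "\<And>A B. A \<in> T \<Longrightarrow> B \<in> T \<Longrightarrow> A \<union> B \<in> T"
    and "\<And>A B. A \<in> T \<Longrightarrow> B \<in> T \<Longrightarrow> A \<inter> B \<in> T"
  shows "is_top n T"
  using assms by (simp add: is_top_def)

lemma is_topD:
  assumes "is_top n T"
  shows "T \<subseteq> Pow {1..n}" "{} \<in> T" "{1..n} \<in> T"
    "A \<in> T \<Longrightarrow> B \<in> T \<Longrightarrow> A \<union> B \<in> T" "A \<in> T \<Longrightarrow> B \<in> T \<Longrightarrow> A \<inter> B \<in> T"
  using assms by (auto simp: is_top_def)

lemma topologiesD: "a \<in> topologies \<Longrightarrow> is_top (fst a) (snd a)"
  by (auto simp: topologies_def)

lemma open_subset: "is_top n T \<Longrightarrow> U \<in> T \<Longrightarrow> U \<subseteq> {1..n}"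
  using is_topD(1) by blast

lemma finite_topology: "is_top n T \<Longrightarrow> finite T"
  by (rule finite_subset[OF is_topD(1)]) simp_all

lemma tle_refl: "tle T i i"
  by (simp add: tle_def)

lemma tle_trans: "tle T i j \<Longrightarrow> tle T j k \<Longrightarrow> tle T i k"
  by (auto simp: tle_def)

lemma tequiv_refl: "tequiv T i i"
  by (simp add: tequiv_def tle_refl)

lemma tequiv_sym: "tequiv T i j \<Longrightarrow> tequiv T j i"
  by (simp add: tequiv_def)

lemma tequiv_trans: "tequiv T i j \<Longrightarrow> tequiv T j k \<Longrightarrow> tequiv T i k"
  by (auto simp: tequiv_def intro: tle_trans)

lemma tle_in_interval:
  assumes "is_top n T" "i \<in> {1..n}" "tle T i j" shows "j \<in> {1..n}"
  using assms(3) is_topD(3)[OF assms(1)] assms(2) unfolding tle_def by blast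

lemma open_tle: "U \<in> T \<Longrightarrow> i \<in> U \<Longrightarrow> tle T i j \<Longrightarrow> j \<in> U"
  by (auto simp: tle_def)

lemma is_top_Union:
  assumes "is_top n T" shows "finite F \<Longrightarrow> F \<subseteq> T \<Longrightarrow> \<Union>F \<in> T"
  by (induction F rule: finite_induct) (simp_all add: is_topD(2,4)[OF assms])

lemma is_top_Inter:
  assumes "is_top n T" shows "finite F \<Longrightarrow> F \<noteq> {} \<Longrightarrow> F \<subseteq> T \<Longrightarrow> \<Inter>F \<in> T"
  by (induction F rule: finite_ne_induct) (simp_all add: is_topD(5)[OF assms])

text \<open>An up-set is the union of the minimal neighbourhoods of its points.\<close>

lemma upset_open:
  assumes T: "is_top n T" and sub: "U \<subseteq> {1..n}" and up: "\<And>i j. i \<in> U \<Longrightarrow> tle T i j \<Longrightarrow> j \<in> U"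
  shows "U \<in> T"
proof -
  define N where "N i = \<Inter>{V\<in>T. i \<in> V}" for i
  have N_open: "N i \<in> T" if "i \<in> U" for i
    unfolding N_def
  proof (rule is_top_Inter[OF T])
    show "finite {V \<in> T. i \<in> V}" using finite_topology[OF T] by simp
    show "{V \<in> T. i \<in> V} \<noteq> {}" using is_topD(3)[OF T] that sub by blast
  qed auto
  have "N i \<subseteq> U" if "i \<in> U" for i
  proof
    fix j assume "j \<in> N i"
    then have "tle T i j" by (auto simp: N_def tle_def)
    then show "j \<in> U" using up that by blast
  qed
  then have "U = \<Union>(N ` U)"
    by (auto simp: N_def)
  moreover have "\<Union>(N ` U) \<in> T"
    by (rule is_top_Union[OF T]) (use N_open finite_subset[OF sub] in auto)
  ultimately show ?thesis by simp
qed

definition saturated :: "nat set set \<Rightarrow> nat set \<Rightarrow> bool" where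
  "saturated T Y \<longleftrightarrow> (\<forall>y\<in>Y. \<forall>z. tequiv T y z \<longrightarrow> z \<in> Y)"

lemma open_saturated: "U \<in> T \<Longrightarrow> saturated T U"
  by (auto simp: saturated_def tequiv_def intro: open_tle)

lemma closed_saturated:
  assumes T: "is_top n T" and U: "U \<in> T" shows "saturated T ({1..n} - U)"
  unfolding saturated_def
proof (intro ballI allI impI)
  fix y z assume y: "y \<in> {1..n} - U" and "tequiv T y z"
  then have yz: "tle T y z" "tle T z y" by (simp_all add: tequiv_def)
  have "z \<in> {1..n}" using tle_in_interval[OF T _ yz(1)] y by blast
  moreover have "z \<notin> U" using open_tle[OF U _ yz(2)] y by blast
  ultimately show "z \<in> {1..n} - U" by simp
qed

lemma rank_in_mono: "finite Y \<Longrightarrow> mono (rank_in Y)"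
  unfolding rank_in_def by (intro monoI card_mono) auto

lemma rank_in_strict_mono:
  assumes "finite Y" "y \<in> Y" "y' \<in> Y" "y < y'"
  shows "rank_in Y y < rank_in Y y'"
proof -
  have "{z \<in> Y. z \<le> y} \<subset> {z \<in> Y. z \<le> y'}"
    using assms(2-4) by force
  then show ?thesis
    unfolding rank_in_def by (rule psubset_card_mono[rotated]) (use assms(1) in simp)
qed

lemma inj_on_rank_in: "finite Y \<Longrightarrow> inj_on (rank_in Y) Y"
  by (rule inj_onI) (metis linorder_cases less_irrefl rank_in_strict_mono)

lemma rank_in_image: "finite Y \<Longrightarrow> rank_in Y ` Y = {1..card Y}"
proof -
  assume Y: "finite Y"
  have "rank_in Y ` Y \<subseteq> {1..card Y}"
    unfolding rank_in_def using Y by (auto intro!: card_mono simp: Suc_le_eq card_gt_0_iff)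
  moreover have "card (rank_in Y ` Y) = card {1..card Y}"
    using card_image[OF inj_on_rank_in[OF Y]] by simp
  ultimately show ?thesis
    using card_subset_eq by (metis finite_atLeastAtMost)
qed

lemma rank_in_image_strict_mono:
  assumes "finite B" "b \<in> B" and g: "\<And>x y. x \<in> B \<Longrightarrow> y \<in> B \<Longrightarrow> x < y \<Longrightarrow> g x < g y"
  shows "rank_in (g ` B) (g b) = rank_in B b"
proof -
  have le_iff: "g z \<le> g b \<longleftrightarrow> z \<le> b" if "z \<in> B" for z
    using g[OF that assms(2)] g[OF assms(2) that] by (cases z b rule: linorder_cases) auto
  have "inj_on g B"
    by (rule inj_onI) (metis g linorder_cases less_irrefl)
  moreover have "{z \<in> g ` B. z \<le> g b} = g ` {z \<in> B. z \<le> b}"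
    using le_iff by auto
  ultimately show ?thesis
    unfolding rank_in_def by (simp add: card_image inj_on_subset)
qed

lemma shift_image_gt:
  assumes "M' \<subseteq> {1..}" "z \<in> (\<lambda>k. k + n) ` M'"
  shows "n < (z::nat)"
  using assms by auto

lemma rank_in_Un_shift_lower:
  assumes "M \<subseteq> {..n}" "M' \<subseteq> {1..}" "m \<in> M"
  shows "rank_in (M \<union> (\<lambda>k. k + n) ` M') m = rank_in M m"
proof -
  have "m \<le> n" using assms(1,3) by auto
  then have "{z \<in> M \<union> (\<lambda>k. k + n) ` M'. z \<le> m} = {z \<in> M. z \<le> m}"
    using shift_image_gt[OF assms(2)] by fastforce
  then show ?thesis by (simp add: rank_in_def)
qed

lemma rank_in_Un_shift_upper:
  assumes "finite M" "M \<subseteq> {..n}" "finite M'" "M' \<subseteq> {1..}" "m \<in> M'"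
  shows "rank_in (M \<union> (\<lambda>k. k + n) ` M') (m + n) = card M + rank_in M' m"
proof -
  have "{z \<in> M \<union> (\<lambda>k. k + n) ` M'. z \<le> m + n} = M \<union> (\<lambda>k. k + n) ` {z \<in> M'. z \<le> m}"
    using assms(2) by auto
  moreover have "M \<inter> (\<lambda>k. k + n) ` {z \<in> M'. z \<le> m} = {}"
    using assms(2) shift_image_gt[of "{z \<in> M'. z \<le> m}" _ n] assms(4) by fastforce
  ultimately show ?thesis
    unfolding rank_in_def using assms(1,3) by (simp add: card_Un_disjoint card_image)
qed

section \<open>Equivalence classes and the quotient topology\<close>

definition class_min :: "topo \<Rightarrow> nat \<Rightarrow> nat" where
  "class_min t i = Min (tclass t i)"

lemma tclass_eq: "tclass (n, T) i = {j \<in> {1..n}. tequiv T i j}"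
  by (simp add: tclass_def)

lemma self_in_tclass: "i \<in> {1..n} \<Longrightarrow> i \<in> tclass (n, T) i"
  by (simp add: tclass_eq tequiv_refl)

lemma finite_tclass: "finite (tclass (n, T) i)"
  by (simp add: tclass_eq)

lemma class_min_in_tclass: "i \<in> {1..n} \<Longrightarrow> class_min (n, T) i \<in> tclass (n, T) i"
  unfolding class_min_def by (rule Min_in[OF finite_tclass]) (use self_in_tclass in blast)

lemma class_min_in_interval: "i \<in> {1..n} \<Longrightarrow> class_min (n, T) i \<in> {1..n}"
  using class_min_in_tclass[of i n T] by (simp add: tclass_eq)

lemma tequiv_class_min: "i \<in> {1..n} \<Longrightarrow> tequiv T i (class_min (n, T) i)"
  using class_min_in_tclass[of i n T] by (simp add: tclass_eq)

lemma class_min_eq_iff: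
  assumes "i \<in> {1..n}" "j \<in> {1..n}"
  shows "class_min (n, T) i = class_min (n, T) j \<longleftrightarrow> tequiv T i j"
proof
  assume eq: "class_min (n, T) i = class_min (n, T) j"
  have "tequiv T i (class_min (n, T) j)"
    using tequiv_class_min[OF assms(1), of T] unfolding eq .
  then show "tequiv T i j"
    using tequiv_trans[OF _ tequiv_sym[OF tequiv_class_min[OF assms(2), of T]]] by blast
next
  assume "tequiv T i j"
  then have "tclass (n, T) i = tclass (n, T) j"
    unfolding tclass_eq using tequiv_sym tequiv_trans by blast
  then show "class_min (n, T) i = class_min (n, T) j"
    by (simp add: class_min_def)
qed

lemma class_min_image_subset:
  assumes "Y \<subseteq> {1..n}" "saturated T Y"
  shows "class_min (n, T) ` Y \<subseteq> Y"
proof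
  fix z assume "z \<in> class_min (n, T) ` Y"
  then obtain y where y: "y \<in> Y" "z = class_min (n, T) y" by blast
  then have "tequiv T y z" using tequiv_class_min[of y n T] assms(1) by blast
  then show "z \<in> Y" using assms(2) y(1) unfolding saturated_def by blast
qed

lemma class_mins_eq_image: "class_mins (n, T) = class_min (n, T) ` {1..n}"
  by (auto simp: class_mins_def class_min_def)

lemma nclasses_eq_card: "nclasses (n, T) = card (class_min (n, T) ` {1..n})"
  by (simp add: nclasses_def class_mins_eq_image)

lemma nclasses_le: "nclasses (n, T) \<le> n"
  unfolding nclasses_eq_card using card_image_le[of "{1..n}"] by simp

lemma class_idx_eq_rank:
  "class_idx (n, T) x = rank_in (class_min (n, T) ` {1..n}) (class_min (n, T) x)"
  by (simp add: class_idx_def rank_in_def class_mins_eq_image class_min_def)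

lemma class_idx_image: "class_idx (n, T) ` {1..n} = {1..nclasses (n, T)}"
  unfolding class_idx_eq_rank nclasses_eq_card
  by (subst image_image[symmetric, of "rank_in _"]) (simp add: rank_in_image)

lemma class_idx_eq_iff:
  assumes "x \<in> {1..n}" "y \<in> {1..n}"
  shows "class_idx (n, T) x = class_idx (n, T) y \<longleftrightarrow> tequiv T x y"
proof -
  have "inj_on (rank_in (class_min (n, T) ` {1..n})) (class_min (n, T) ` {1..n})"
    by (rule inj_on_rank_in) simp
  then have "class_idx (n, T) x = class_idx (n, T) y \<longleftrightarrow> class_min (n, T) x = class_min (n, T) y"
    unfolding class_idx_eq_rank using assms by (auto dest: inj_onD)
  then show ?thesis
    using class_min_eq_iff[OF assms] by simp
qed

lemma class_idx_image_Int:
  assumes "A \<subseteq> {1..n}" "B \<subseteq> {1..n}" "saturated T A"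
  shows "class_idx (n, T) ` (A \<inter> B) = class_idx (n, T) ` A \<inter> class_idx (n, T) ` B"
proof (rule equalityI; rule subsetI)
  fix c assume "c \<in> class_idx (n, T) ` A \<inter> class_idx (n, T) ` B"
  then obtain a b where ab: "a \<in> A" "b \<in> B" "c = class_idx (n, T) a" "c = class_idx (n, T) b"
    by blast
  moreover have "a \<in> {1..n}" "b \<in> {1..n}"
    using ab(1,2) assms(1,2) by auto
  ultimately have "tequiv T a b"
    using class_idx_eq_iff by metis
  then have "b \<in> A"
    using assms(3) ab(1) by (auto simp: saturated_def)
  then show "c \<in> class_idx (n, T) ` (A \<inter> B)"
    using ab by blast
qed blast

lemma class_idx_image_Diff:
  assumes "A \<subseteq> {1..n}" "saturated T A"
  shows "class_idx (n, T) ` ({1..n} - A) = {1..nclasses (n, T)} - class_idx (n, T) ` A"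
proof -
  have "class_idx (n, T) ` ({1..n} - A) \<inter> class_idx (n, T) ` A = {}"
    using class_idx_image_Int[OF assms(1) _ assms(2), of "{1..n} - A"] by auto
  moreover have "class_idx (n, T) ` ({1..n} - A) \<union> class_idx (n, T) ` A = {1..nclasses (n, T)}"
    using class_idx_image[of n T] assms(1) by (metis Diff_partition Un_commute image_Un)
  ultimately show ?thesis by blast
qed

lemma open_class_idx_mem:
  assumes T: "is_top n T" and U: "U \<in> T" "x \<in> U"
    and y: "y \<in> {1..n}" "class_idx (n, T) x = class_idx (n, T) y"
  shows "y \<in> U"
proof -
  have "tequiv T x y"
    using class_idx_eq_iff[of x n y T] open_subset[OF T U(1)] U(2) y by auto
  then show ?thesis
    using open_saturated[OF U(1)] U(2) by (auto simp: saturated_def)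
qed

lemma inj_on_image_class_idx:
  assumes T: "is_top n T"
  shows "inj_on ((`) (class_idx (n, T))) T"
proof -
  have "X \<subseteq> Y" if XY: "X \<in> T" "Y \<in> T" "class_idx (n, T) ` X = class_idx (n, T) ` Y" for X Y
  proof
    fix x assume x: "x \<in> X"
    then obtain y where "y \<in> Y" "class_idx (n, T) y = class_idx (n, T) x"
      using XY(3) by (metis imageE imageI)
    then show "x \<in> Y"
      using open_class_idx_mem[OF T XY(2)] open_subset[OF T XY(1)] x by blast
  qed
  then show ?thesis
    by (intro inj_onI subset_antisym) simp_all
qed

lemma tle_image_iff:
  assumes sat: "\<And>U x y. U \<in> T \<Longrightarrow> x \<in> U \<Longrightarrow> y \<in> A \<Longrightarrow> g x = g y \<Longrightarrow> y \<in> U"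
    and xy: "x \<in> A" "y \<in> A"
  shows "tle ((`) g ` T) (g x) (g y) \<longleftrightarrow> tle T x y"
proof
  assume le: "tle ((`) g ` T) (g x) (g y)"
  show "tle T x y" unfolding tle_def
  proof (intro ballI impI)
    fix U assume U: "U \<in> T" "x \<in> U"
    then have "g y \<in> g ` U" using le by (auto simp: tle_def)
    then obtain y' where "y' \<in> U" "g y' = g y" by auto
    then show "y \<in> U" using sat U(1) xy(2) by blast
  qed
next
  assume le: "tle T x y"
  show "tle ((`) g ` T) (g x) (g y)" unfolding tle_def
  proof (intro ballI impI)
    fix V assume V: "V \<in> (`) g ` T" "g x \<in> V"
    then obtain U where U: "U \<in> T" "V = g ` U" by auto
    then obtain x' where "x' \<in> U" "g x' = g x" using V by auto
    then have "x \<in> U" using sat U(1) xy(1) by blast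
    then show "g y \<in> V" using le U by (auto simp: tle_def)
  qed
qed

lemma tle_class_idx_image_iff:
  assumes T: "is_top n T" and xy: "x \<in> {1..n}" "y \<in> {1..n}"
  shows "tle ((`) (class_idx (n, T)) ` T) (class_idx (n, T) x) (class_idx (n, T) y) \<longleftrightarrow> tle T x y"
  by (rule tle_image_iff[OF open_class_idx_mem[OF T] xy])

lemma bar_le_class_idx_iff:
  assumes "x \<in> {1..n}" "y \<in> {1..n}"
  shows "bar_le (n, T) (class_idx (n, T) x) (class_idx (n, T) y) \<longleftrightarrow> tle T x y"
proof
  assume "bar_le (n, T) (class_idx (n, T) x) (class_idx (n, T) y)"
  then show "tle T x y"
    using assms by (auto simp: bar_le_def)
next
  assume le: "tle T x y"
  show "bar_le (n, T) (class_idx (n, T) x) (class_idx (n, T) y)"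
    unfolding bar_le_def fst_conv snd_conv
  proof (intro ballI impI)
    fix x' y' assume "x' \<in> {1..n}" "y' \<in> {1..n}"
      "class_idx (n, T) x' = class_idx (n, T) x" "class_idx (n, T) y' = class_idx (n, T) y"
    then have "tequiv T x' x" "tequiv T y y'"
      using class_idx_eq_iff assms tequiv_sym by blast+
    then show "tle T x' y'"
      using le by (auto simp: tequiv_def intro: tle_trans)
  qed
qed

lemma upset_in_class_idx_image:
  assumes T: "is_top n T" and I: "I \<subseteq> {1..nclasses (n, T)}"
    and up: "\<And>a b. a \<in> I \<Longrightarrow> b \<in> {1..nclasses (n, T)} \<Longrightarrow> bar_le (n, T) a b \<Longrightarrow> b \<in> I"
  shows "I \<in> (`) (class_idx (n, T)) ` T"
proof -
  let ?f = "class_idx (n, T)"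
  define U where "U = {x \<in> {1..n}. ?f x \<in> I}"
  have "I \<subseteq> ?f ` U"
  proof
    fix a assume "a \<in> I"
    moreover from this obtain x where "x \<in> {1..n}" "a = ?f x"
      using I class_idx_image[of n T] by (metis imageE subsetD)
    ultimately show "a \<in> ?f ` U"
      by (auto simp: U_def)
  qed
  then have "?f ` U = I"
    by (auto simp: U_def)
  moreover have "U \<in> T"
  proof (rule upset_open[OF T])
    show "U \<subseteq> {1..n}" by (auto simp: U_def)
  next
    fix i j assume ij: "i \<in> U" "tle T i j"
    then have i: "i \<in> {1..n}" "?f i \<in> I"
      by (auto simp: U_def)
    have j: "j \<in> {1..n}"
      using tle_in_interval[OF T i(1) ij(2)] .
    have "?f j \<in> I"
      using up[OF i(2)] bar_le_class_idx_iff[OF i(1) j] ij(2) class_idx_image[of n T] j by blast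
    then show "j \<in> U"
      using j by (simp add: U_def)
  qed
  ultimately show ?thesis by blast
qed

lemma class_idx_image_upset:
  assumes T: "is_top n T" and U: "U \<in> T"
    and ab: "a \<in> class_idx (n, T) ` U" "b \<in> {1..nclasses (n, T)}" "bar_le (n, T) a b"
  shows "b \<in> class_idx (n, T) ` U"
proof -
  obtain x where x: "x \<in> U" "a = class_idx (n, T) x"
    using ab(1) by blast
  obtain y where y: "y \<in> {1..n}" "b = class_idx (n, T) y"
    using ab(2) class_idx_image[of n T] by (metis imageE)
  have "tle T x y"
    using bar_le_class_idx_iff[OF _ y(1)] open_subset[OF T U] x ab(3) y(2) by auto
  then show ?thesis
    using open_tle[OF U x(1)] y(2) by blast
qed

lemma bar_top_eq_image:
  assumes T: "is_top n T"
  shows "bar_top (n, T) = (nclasses (n, T), (`) (class_idx (n, T)) ` T)"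
proof -
  have "{I. I \<subseteq> {1..nclasses (n, T)} \<and> (\<forall>a\<in>I. \<forall>b\<in>{1..nclasses (n, T)}. bar_le (n, T) a b \<longrightarrow> b \<in> I)}
      = (`) (class_idx (n, T)) ` T"
  proof (intro equalityI subsetI)
    fix I assume "I \<in> {I. I \<subseteq> {1..nclasses (n, T)} \<and>
      (\<forall>a\<in>I. \<forall>b\<in>{1..nclasses (n, T)}. bar_le (n, T) a b \<longrightarrow> b \<in> I)}"
    then show "I \<in> (`) (class_idx (n, T)) ` T"
      by (intro upset_in_class_idx_image[OF T]) auto
  next
    fix I assume "I \<in> (`) (class_idx (n, T)) ` T"
    then obtain U where U: "U \<in> T" "I = class_idx (n, T) ` U"
      by blast
    have "I \<subseteq> {1..nclasses (n, T)}"
      using open_subset[OF T U(1)] class_idx_image[of n T] U(2) by blast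
    then show "I \<in> {I. I \<subseteq> {1..nclasses (n, T)} \<and>
        (\<forall>a\<in>I. \<forall>b\<in>{1..nclasses (n, T)}. bar_le (n, T) a b \<longrightarrow> b \<in> I)}"
      using class_idx_image_upset[OF T U(1)] U(2) by simp
  qed
  then show ?thesis
    by (simp add: bar_top_def)
qed

lemma is_top_class_idx_image:
  assumes T: "is_top n T"
  shows "is_top (nclasses (n, T)) ((`) (class_idx (n, T)) ` T)"
proof (rule is_topI)
  let ?f = "class_idx (n, T)"
  show "(`) ?f ` T \<subseteq> Pow {1..nclasses (n, T)}"
    using open_subset[OF T] class_idx_image[of n T] by blast
  show "{} \<in> (`) ?f ` T"
    using is_topD(2)[OF T] by blast
  show "{1..nclasses (n, T)} \<in> (`) ?f ` T"
    using is_topD(3)[OF T] class_idx_image[of n T] by (metis imageI)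
next
  fix A B assume "A \<in> (`) (class_idx (n, T)) ` T" "B \<in> (`) (class_idx (n, T)) ` T"
  then obtain U V where UV: "U \<in> T" "V \<in> T" "A = class_idx (n, T) ` U" "B = class_idx (n, T) ` V"
    by blast
  have "A \<union> B = class_idx (n, T) ` (U \<union> V)"
    using UV(3,4) by (simp add: image_Un)
  then show "A \<union> B \<in> (`) (class_idx (n, T)) ` T"
    using is_topD(4)[OF T UV(1,2)] by blast
  have "A \<inter> B = class_idx (n, T) ` (U \<inter> V)"
    using class_idx_image_Int[OF open_subset[OF T UV(1)] open_subset[OF T UV(2)] open_saturated[OF UV(1)]] UV
    by simp
  then show "A \<inter> B \<in> (`) (class_idx (n, T)) ` T"
    using is_topD(5)[OF T UV(1,2)] by blast
qed

lemma is_T0_bar_top: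
  assumes T: "is_top n T"
  shows "is_T0 (bar_top (n, T))"
  unfolding is_T0_def bar_top_eq_image[OF T] fst_conv snd_conv
proof (intro ballI impI)
  fix i j assume "i \<in> {1..nclasses (n, T)}" "j \<in> {1..nclasses (n, T)}"
    and eq: "tequiv ((`) (class_idx (n, T)) ` T) i j"
  then obtain x y where xy: "x \<in> {1..n}" "y \<in> {1..n}" "i = class_idx (n, T) x" "j = class_idx (n, T) y"
    using class_idx_image[of n T] by (metis imageE)
  have "tequiv T x y"
    using eq tle_class_idx_image_iff[OF T xy(1,2)] tle_class_idx_image_iff[OF T xy(2,1)] xy(3,4)
    by (simp add: tequiv_def)
  then show "i = j"
    using class_idx_eq_iff[OF xy(1,2)] xy(3,4) by simp
qed

lemma class_idx_of_T0:
  assumes T0: "is_T0 (n, T)" and x: "x \<in> {1..n}"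
  shows "class_idx (n, T) x = x"
proof -
  have class_min_id: "class_min (n, T) y = y" if y: "y \<in> {1..n}" for y
  proof -
    have "tclass (n, T) y \<subseteq> {y}"
    proof
      fix j assume "j \<in> tclass (n, T) y"
      then have "j \<in> {1..n}" "tequiv T y j"
        by (simp_all add: tclass_eq)
      then show "j \<in> {y}"
        using T0 y unfolding is_T0_def fst_conv snd_conv by blast
    qed
    then have "tclass (n, T) y = {y}"
      using self_in_tclass[OF y] by blast
    then show ?thesis
      by (simp add: class_min_def)
  qed
  have "class_min (n, T) ` {1..n} = (\<lambda>y. y) ` {1..n}"
    by (rule image_cong[OF refl class_min_id])
  then have "class_min (n, T) ` {1..n} = {1..n}"
    by simp
  moreover have "{z \<in> {1..n}. z \<le> x} = {1..x}"
    using x by auto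
  ultimately show ?thesis
    unfolding class_idx_eq_rank rank_in_def class_min_id[OF x] by simp
qed

lemma bar_top_of_T0:
  assumes T: "is_top n T" and T0: "is_T0 (n, T)"
  shows "bar_top (n, T) = (n, T)" "cdef (n, T) = 0"
proof -
  have "class_idx (n, T) ` U = U" if "U \<in> T" for U
  proof -
    have "class_idx (n, T) ` U = (\<lambda>x. x) ` U"
      by (rule image_cong[OF refl]) (use class_idx_of_T0[OF T0] open_subset[OF T that] in blast)
    then show ?thesis by simp
  qed
  then have "(`) (class_idx (n, T)) ` T = (\<lambda>U. U) ` T"
    by (rule image_cong[OF refl])
  moreover have "class_idx (n, T) ` {1..n} = (\<lambda>x. x) ` {1..n}"
    by (rule image_cong[OF refl class_idx_of_T0[OF T0]])
  then have "{1..nclasses (n, T)} = {1..n}"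
    using class_idx_image[of n T] by (metis image_ident)
  then have "nclasses (n, T) = n"
    by (metis card_atLeastAtMost diff_Suc_1)
  ultimately show "bar_top (n, T) = (n, T)" "cdef (n, T) = 0"
    by (simp_all add: bar_top_eq_image[OF T] cdef_def)
qed

section \<open>The two products on basis elements\<close>

abbreviation conc_opens :: "nat \<Rightarrow> nat set set \<Rightarrow> nat set set \<Rightarrow> nat set set" where
  "conc_opens n T T' \<equiv> (\<lambda>(U, U'). U \<union> (\<lambda>k. k + n) ` U') ` (T \<times> T')"

abbreviation down_opens :: "nat \<Rightarrow> nat \<Rightarrow> nat set set \<Rightarrow> nat set set \<Rightarrow> nat set set" where
  "down_opens n n' T T' \<equiv>
     (\<lambda>U. U \<union> (\<lambda>k. k + n) ` {1..n'}) ` T \<union> (\<lambda>U'. (\<lambda>k. k + n) ` U') ` T'"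

lemma conc_top_eq: "conc_top (n, T) (n', T') = (n + n', conc_opens n T T')"
  by (auto simp: conc_top_def)

lemma down_top_eq: "down_top (n, T) (n', T') = (n + n', down_opens n n' T T')"
  by (auto simp: down_top_def)

lemma interval_add_split: "{1..(n::nat) + n'} = {1..n} \<union> (\<lambda>k. k + n) ` {1..n'}"
proof -
  have "j \<in> (\<lambda>k. k + n) ` {1..n'}" if "n < j" "j \<le> n + n'" for j
    using that by (auto intro: image_eqI[of j _ "j - n"])
  then show ?thesis by fastforce
qed

lemma mem_Un_shift_iff:
  assumes "U \<subseteq> {1..(n::nat)}" "U' \<subseteq> {1..(n'::nat)}"
  shows "x \<in> U \<union> (\<lambda>k. k + n) ` U' \<longleftrightarrow> (x \<le> n \<and> x \<in> U) \<or> (n < x \<and> x - n \<in> U')"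
proof -
  have "x \<in> (\<lambda>k. k + n) ` U' \<longleftrightarrow> n < x \<and> x - n \<in> U'"
    using assms(2) by (force intro: image_eqI[of x _ "x - n"])
  moreover have "x \<in> U \<Longrightarrow> x \<le> n"
    using assms(1) by auto
  ultimately show ?thesis by auto
qed

lemma mem_shift_iff:
  "U' \<subseteq> {1..(n'::nat)} \<Longrightarrow> x \<in> (\<lambda>k. k + (n::nat)) ` U' \<longleftrightarrow> n < x \<and> x - n \<in> U'"
  using mem_Un_shift_iff[OF empty_subsetI] by simp

lemma Un_shift_Int:
  assumes "U1 \<subseteq> {1..(n::nat)}" "U2 \<subseteq> {1..n}" "U1' \<subseteq> {1..(n'::nat)}" "U2' \<subseteq> {1..n'}"
  shows "(U1 \<union> (\<lambda>k. k + n) ` U1') \<inter> (U2 \<union> (\<lambda>k. k + n) ` U2') = (U1 \<inter> U2) \<union> (\<lambda>k. k + n) ` (U1' \<inter> U2')"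
proof -
  have sub: "U1 \<inter> U2 \<subseteq> {1..n}" "U1' \<inter> U2' \<subseteq> {1..n'}"
    using assms by auto
  show ?thesis
    by (rule set_eqI, unfold Int_iff mem_Un_shift_iff[OF assms(1,3)] mem_Un_shift_iff[OF assms(2,4)]
        mem_Un_shift_iff[OF sub]) auto
qed

lemma Un_shift_in_conc_opens: "U \<in> T \<Longrightarrow> U' \<in> T' \<Longrightarrow> U \<union> (\<lambda>k. k + n) ` U' \<in> conc_opens n T T'"
  by force

lemma is_top_conc:
  assumes T: "is_top n T" and T': "is_top n' T'"
  shows "is_top (n + n') (conc_opens n T T')"
proof (rule is_topI)
  show "conc_opens n T T' \<subseteq> Pow {1..n + n'}"
  proof
    fix V assume "V \<in> conc_opens n T T'"
    then obtain U U' where "U \<in> T" "U' \<in> T'" "V = U \<union> (\<lambda>k. k + n) ` U'"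
      by auto
    then have "V \<subseteq> {1..n} \<union> (\<lambda>k. k + n) ` {1..n'}"
      using open_subset[OF T] open_subset[OF T'] by blast
    then show "V \<in> Pow {1..n + n'}"
      unfolding interval_add_split Pow_iff .
  qed
  show "{} \<in> conc_opens n T T'"
    using Un_shift_in_conc_opens[OF is_topD(2)[OF T] is_topD(2)[OF T']] by simp
  show "{1..n + n'} \<in> conc_opens n T T'"
    unfolding interval_add_split by (rule Un_shift_in_conc_opens[OF is_topD(3)[OF T] is_topD(3)[OF T']])
next
  fix A B assume "A \<in> conc_opens n T T'" "B \<in> conc_opens n T T'"
  then obtain U1 U1' U2 U2' where U: "U1 \<in> T" "U1' \<in> T'" "U2 \<in> T" "U2' \<in> T'"
    and AB: "A = U1 \<union> (\<lambda>k. k + n) ` U1'" "B = U2 \<union> (\<lambda>k. k + n) ` U2'"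
    by auto
  have "A \<union> B = (U1 \<union> U2) \<union> (\<lambda>k. k + n) ` (U1' \<union> U2')"
    unfolding AB by auto
  then show "A \<union> B \<in> conc_opens n T T'"
    using Un_shift_in_conc_opens[OF is_topD(4)[OF T U(1,3)] is_topD(4)[OF T' U(2,4)]] by simp
  have "A \<inter> B = (U1 \<inter> U2) \<union> (\<lambda>k. k + n) ` (U1' \<inter> U2')"
    unfolding AB
    by (rule Un_shift_Int[OF open_subset[OF T U(1)] open_subset[OF T U(3)] open_subset[OF T' U(2)]
          open_subset[OF T' U(4)]])
  then show "A \<inter> B \<in> conc_opens n T T'"
    using Un_shift_in_conc_opens[OF is_topD(5)[OF T U(1,3)] is_topD(5)[OF T' U(2,4)]] by simp
qed

lemma down_opensE:
  assumes "V \<in> down_opens n n' T T'"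
  obtains (lower) U where "U \<in> T" "V = U \<union> (\<lambda>k. k + n) ` {1..n'}"
    | (upper) U' where "U' \<in> T'" "V = (\<lambda>k. k + n) ` U'"
  using assms by blast

lemma is_top_down:
  assumes T: "is_top n T" and T': "is_top n' T'"
  shows "is_top (n + n') (down_opens n n' T T')"
proof -
  let ?sh = "\<lambda>U'. (\<lambda>k. k + n) ` U'"
  let ?D = "down_opens n n' T T'"
  have lower: "U \<union> ?sh {1..n'} \<in> ?D" if "U \<in> T" for U
    using that by blast
  have upper: "?sh U' \<in> ?D" if "U' \<in> T'" for U'
    using that by blast
  have lower_lower: "(U1 \<union> ?sh {1..n'}) \<union> (U2 \<union> ?sh {1..n'}) \<in> ?D \<and>
      (U1 \<union> ?sh {1..n'}) \<inter> (U2 \<union> ?sh {1..n'}) \<in> ?D" if "U1 \<in> T" "U2 \<in> T" for U1 U2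
  proof -
    have "(U1 \<union> ?sh {1..n'}) \<union> (U2 \<union> ?sh {1..n'}) = (U1 \<union> U2) \<union> ?sh {1..n'}"
      "(U1 \<union> ?sh {1..n'}) \<inter> (U2 \<union> ?sh {1..n'}) = (U1 \<inter> U2) \<union> ?sh {1..n'}"
      by blast+
    then show ?thesis
      using lower[OF is_topD(4)[OF T that]] lower[OF is_topD(5)[OF T that]] by simp
  qed
  have lower_upper: "(U \<union> ?sh {1..n'}) \<union> ?sh U' \<in> ?D \<and> (U \<union> ?sh {1..n'}) \<inter> ?sh U' \<in> ?D"
    if "U \<in> T" "U' \<in> T'" for U U'
  proof -
    have "U \<subseteq> {1..n}" "U' \<subseteq> {1..n'}"
      using open_subset[OF T that(1)] open_subset[OF T' that(2)] by auto
    then have "(U \<union> ?sh {1..n'}) \<union> ?sh U' = U \<union> ?sh {1..n'}"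
      "(U \<union> ?sh {1..n'}) \<inter> ?sh U' = ?sh U'"
      by auto
    then show ?thesis
      using lower[OF that(1)] upper[OF that(2)] by simp
  qed
  have upper_upper: "?sh U1' \<union> ?sh U2' \<in> ?D \<and> ?sh U1' \<inter> ?sh U2' \<in> ?D"
    if "U1' \<in> T'" "U2' \<in> T'" for U1' U2'
  proof -
    have "?sh U1' \<union> ?sh U2' = ?sh (U1' \<union> U2')" "?sh U1' \<inter> ?sh U2' = ?sh (U1' \<inter> U2')"
      by (simp_all add: image_Un image_Int inj_on_def)
    then show ?thesis
      using upper[OF is_topD(4)[OF T' that]] upper[OF is_topD(5)[OF T' that]] by simp
  qed
  have Un_Int_closed: "A \<union> B \<in> ?D \<and> A \<inter> B \<in> ?D" if A: "A \<in> ?D" and B: "B \<in> ?D" for A B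
    using A
  proof (cases rule: down_opensE)
    case A': (lower U1)
    from B show ?thesis
    proof (cases rule: down_opensE)
      case (lower U2)
      then show ?thesis using lower_lower[OF A'(1) lower(1)] A'(2) by simp
    next
      case (upper U2')
      then show ?thesis using lower_upper[OF A'(1) upper(1)] A'(2) by simp
    qed
  next
    case A': (upper U1')
    from B show ?thesis
    proof (cases rule: down_opensE)
      case (lower U2)
      then show ?thesis
        using lower_upper[OF lower(1) A'(1)] A'(2) by (simp add: Un_commute Int_commute)
    next
      case (upper U2')
      then show ?thesis using upper_upper[OF A'(1) upper(1)] A'(2) by simp
    qed
  qed
  show ?thesis
  proof (rule is_topI)
    show "?D \<subseteq> Pow {1..n + n'}"
    proof
      fix V assume "V \<in> ?D"
      then have "V \<subseteq> {1..n} \<union> ?sh {1..n'}"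
      proof (cases rule: down_opensE)
        case (lower U)
        then show ?thesis using open_subset[OF T lower(1)] by blast
      next
        case (upper U')
        then show ?thesis using open_subset[OF T' upper(1)] by blast
      qed
      then show "V \<in> Pow {1..n + n'}"
        unfolding interval_add_split Pow_iff .
    qed
    show "{} \<in> ?D"
      using upper[OF is_topD(2)[OF T']] by simp
    show "{1..n + n'} \<in> ?D"
      unfolding interval_add_split by (rule lower[OF is_topD(3)[OF T]])
  next
    fix A B assume "A \<in> ?D" "B \<in> ?D"
    then show "A \<union> B \<in> ?D" "A \<inter> B \<in> ?D"
      using Un_Int_closed by simp_all
  qed
qed

lemma tle_conc_opensI:
  assumes T: "is_top n T" and T': "is_top n' T'" and ij: "i \<in> {1..n + n'}" "j \<in> {1..n + n'}"
    and R: "(i \<le> n \<and> j \<le> n \<and> tle T i j) \<or> (n < i \<and> n < j \<and> tle T' (i - n) (j - n))"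
  shows "tle (conc_opens n T T') i j"
  unfolding tle_def
proof (intro ballI impI)
  let ?sh = "\<lambda>k::nat. k + n"
  fix V assume V: "V \<in> conc_opens n T T'" "i \<in> V"
  then obtain U U' where U: "U \<in> T" "U' \<in> T'" "V = U \<union> ?sh ` U'" by auto
  have mem: "x \<in> V \<longleftrightarrow> (x \<le> n \<and> x \<in> U) \<or> (n < x \<and> x - n \<in> U')" for x
    unfolding U(3) by (rule mem_Un_shift_iff[OF open_subset[OF T U(1)] open_subset[OF T' U(2)]])
  show "j \<in> V"
  proof (cases "i \<le> n")
    case True
    then have a: "j \<le> n" "tle T i j" using R by auto
    have "i \<in> U" using True mem V(2) by auto
    then have "j \<in> U" using open_tle[OF U(1)] a(2) by blast
    then show ?thesis using mem a(1) by blast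
  next
    case False
    then have a: "n < j" "tle T' (i - n) (j - n)" using R by auto
    have "i - n \<in> U'" using False mem V(2) by auto
    then have "j - n \<in> U'" using open_tle[OF U(2)] a(2) by blast
    then show ?thesis using mem a(1) by blast
  qed
qed

lemma tle_conc_opensD:
  assumes T: "is_top n T" and T': "is_top n' T'" and ij: "i \<in> {1..n + n'}" "j \<in> {1..n + n'}"
    and L: "tle (conc_opens n T T') i j"
  shows "(i \<le> n \<and> j \<le> n \<and> tle T i j) \<or> (n < i \<and> n < j \<and> tle T' (i - n) (j - n))"
proof -
  let ?sh = "\<lambda>k::nat. k + n"
  have triv: "{} \<in> T" "{} \<in> T'" "{1..n} \<in> T" "{1..n'} \<in> T'"
    using is_topD(2,3)[OF T] is_topD(2,3)[OF T'] by auto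
  have test: "j \<in> U \<union> ?sh ` U'" if "U \<in> T" "U' \<in> T'" "i \<in> U \<union> ?sh ` U'" for U U'
    using bspec[OF L[unfolded tle_def] Un_shift_in_conc_opens[OF that(1,2)]] that(3) by (rule mp)
  show ?thesis
  proof (cases "i \<le> n")
    case i_lower: True
    show ?thesis
    proof (cases "j \<le> n")
      case True
      have "tle T i j" unfolding tle_def
      proof (intro ballI impI)
        fix U assume "U \<in> T" "i \<in> U"
        then show "j \<in> U" using test[of U "{}"] triv by simp
      qed
      then show ?thesis using i_lower True by simp
    next
      case False
      have "i \<in> {1..n} \<union> ?sh ` {}" using i_lower ij by simp
      then have "j \<in> {1..n} \<union> ?sh ` {}" using test[of "{1..n}" "{}"] triv by simp
      then show ?thesis using False by simp
    qed
  next
    case i_upper: False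
    show ?thesis
    proof (cases "j \<le> n")
      case False
      have "tle T' (i - n) (j - n)" unfolding tle_def
      proof (intro ballI impI)
        fix U' assume U': "U' \<in> T'" "i - n \<in> U'"
        have m: "x \<in> ?sh ` U' \<longleftrightarrow> (n < x \<and> x - n \<in> U')" for x
          by (rule mem_shift_iff[OF open_subset[OF T' U'(1)]])
        have "i \<in> {} \<union> ?sh ` U'" using m[of i] i_upper U'(2) by simp
        then have "j \<in> {} \<union> ?sh ` U'" using test[of "{}" U'] triv U'(1) by simp
        then show "j - n \<in> U'" using m[of j] by simp
      qed
      then show ?thesis using i_upper False by simp
    next
      case True
      have m: "x \<in> ?sh ` {1..n'} \<longleftrightarrow> (n < x \<and> x - n \<in> {1..n'})" for x
        by (rule mem_shift_iff[OF order_refl])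
      have "i \<in> {} \<union> ?sh ` {1..n'}" using i_upper ij m[of i] by simp
      then have "j \<in> {} \<union> ?sh ` {1..n'}" using test[of "{}" "{1..n'}"] triv by simp
      then show ?thesis using True m[of j] by simp
    qed
  qed
qed

lemma tle_down_opensI:
  assumes T: "is_top n T" and T': "is_top n' T'" and ij: "i \<in> {1..n + n'}" "j \<in> {1..n + n'}"
    and R: "(i \<le> n \<and> j \<le> n \<and> tle T i j) \<or> (n < i \<and> n < j \<and> tle T' (i - n) (j - n)) \<or> (i \<le> n \<and> n < j)"
  shows "tle (down_opens n n' T T') i j"
  unfolding tle_def
proof (intro ballI impI)
  let ?sh = "\<lambda>k::nat. k + n"
  fix V assume V: "V \<in> down_opens n n' T T'" "i \<in> V"
  from V(1) show "j \<in> V"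
  proof (cases rule: down_opensE)
    case (lower U)
    have mem: "x \<in> V \<longleftrightarrow> (x \<le> n \<and> x \<in> U) \<or> (n < x \<and> x - n \<in> {1..n'})" for x
      unfolding lower(2) by (rule mem_Un_shift_iff[OF open_subset[OF T lower(1)] order_refl])
    show ?thesis
    proof (cases "j \<le> n")
      case True
      then have a: "i \<le> n" "tle T i j" using R by auto
      have "i \<in> U" using a(1) mem V(2) by auto
      then have "j \<in> U" using open_tle[OF lower(1)] a(2) by blast
      then show ?thesis using mem True by blast
    next
      case False
      then have "j - n \<in> {1..n'}" using ij by auto
      then show ?thesis using mem False by simp
    qed
  next
    case (upper U')
    have mem: "x \<in> V \<longleftrightarrow> (n < x \<and> x - n \<in> U')" for x
      unfolding upper(2) by (rule mem_shift_iff[OF open_subset[OF T' upper(1)]])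
    have i: "n < i" "i - n \<in> U'" using mem V(2) by auto
    then have a: "n < j" "tle T' (i - n) (j - n)" using R by auto
    then have "j - n \<in> U'" using open_tle[OF upper(1) i(2)] by blast
    then show ?thesis using mem a(1) by blast
  qed
qed

lemma tle_down_opensD:
  assumes T: "is_top n T" and T': "is_top n' T'" and ij: "i \<in> {1..n + n'}" "j \<in> {1..n + n'}"
    and L: "tle (down_opens n n' T T') i j"
  shows "(i \<le> n \<and> j \<le> n \<and> tle T i j) \<or> (n < i \<and> n < j \<and> tle T' (i - n) (j - n)) \<or> (i \<le> n \<and> n < j)"
proof -
  let ?sh = "\<lambda>k::nat. k + n"
  have lower_test: "j \<in> U \<union> ?sh ` {1..n'}" if "U \<in> T" "i \<in> U \<union> ?sh ` {1..n'}" for U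
  proof -
    have "U \<union> ?sh ` {1..n'} \<in> down_opens n n' T T'"
      using that(1) by blast
    from bspec[OF L[unfolded tle_def] this] show ?thesis
      using that(2) by (rule mp)
  qed
  have upper_test: "j \<in> ?sh ` U'" if "U' \<in> T'" "i \<in> ?sh ` U'" for U'
  proof -
    have "?sh ` U' \<in> down_opens n n' T T'"
      using that(1) by blast
    from bspec[OF L[unfolded tle_def] this] show ?thesis
      using that(2) by (rule mp)
  qed
  show ?thesis
  proof (cases "i \<le> n")
    case i_lower: True
    show ?thesis
    proof (cases "j \<le> n")
      case True
      have "tle T i j" unfolding tle_def
      proof (intro ballI impI)
        fix U assume U: "U \<in> T" "i \<in> U"
        have m: "x \<in> U \<union> ?sh ` {1..n'} \<longleftrightarrow> (x \<le> n \<and> x \<in> U) \<or> (n < x \<and> x - n \<in> {1..n'})" for x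
          by (rule mem_Un_shift_iff[OF open_subset[OF T U(1)] order_refl])
        have "j \<in> U \<union> ?sh ` {1..n'}" using lower_test[OF U(1)] U(2) by simp
        then show "j \<in> U" using m[of j] True by simp
      qed
      then show ?thesis using i_lower True by simp
    next
      case False
      then show ?thesis using i_lower by simp
    qed
  next
    case i_upper: False
    have m: "x \<in> ?sh ` {1..n'} \<longleftrightarrow> (n < x \<and> x - n \<in> {1..n'})" for x
      by (rule mem_shift_iff[OF order_refl])
    have "i \<in> ?sh ` {1..n'}" using i_upper ij m[of i] by simp
    then have jn: "n < j" using upper_test[OF is_topD(3)[OF T']] m[of j] by simp
    have "tle T' (i - n) (j - n)" unfolding tle_def
    proof (intro ballI impI)
      fix U' assume U': "U' \<in> T'" "i - n \<in> U'"
      have m': "x \<in> ?sh ` U' \<longleftrightarrow> (n < x \<and> x - n \<in> U')" for x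
        by (rule mem_shift_iff[OF open_subset[OF T' U'(1)]])
      have "i \<in> ?sh ` U'" using m'[of i] i_upper U'(2) by simp
      then have "j \<in> ?sh ` U'" using upper_test[OF U'(1)] by simp
      then show "j - n \<in> U'" using m'[of j] by simp
    qed
    then show ?thesis using i_upper jn by simp
  qed
qed

lemma tequiv_conc_opens_iff:
  assumes T: "is_top n T" and T': "is_top n' T'" and ij: "i \<in> {1..n + n'}" "j \<in> {1..n + n'}"
  shows "tequiv (conc_opens n T T') i j \<longleftrightarrow>
    (i \<le> n \<and> j \<le> n \<and> tequiv T i j) \<or> (n < i \<and> n < j \<and> tequiv T' (i - n) (j - n))"
proof -
  have a: "tle (conc_opens n T T') x y \<longleftrightarrow>
    (x \<le> n \<and> y \<le> n \<and> tle T x y) \<or> (n < x \<and> n < y \<and> tle T' (x - n) (y - n))"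
    if "x \<in> {1..n + n'}" "y \<in> {1..n + n'}" for x y
    using tle_conc_opensI[OF T T' that] tle_conc_opensD[OF T T' that] by blast
  show ?thesis unfolding tequiv_def a[OF ij] a[OF ij(2,1)] by auto
qed

lemma tequiv_down_opens_iff:
  assumes T: "is_top n T" and T': "is_top n' T'" and ij: "i \<in> {1..n + n'}" "j \<in> {1..n + n'}"
  shows "tequiv (down_opens n n' T T') i j \<longleftrightarrow>
    (i \<le> n \<and> j \<le> n \<and> tequiv T i j) \<or> (n < i \<and> n < j \<and> tequiv T' (i - n) (j - n))"
proof -
  have a: "tle (down_opens n n' T T') x y \<longleftrightarrow>
    (x \<le> n \<and> y \<le> n \<and> tle T x y) \<or> (n < x \<and> n < y \<and> tle T' (x - n) (y - n)) \<or> (x \<le> n \<and> n < y)"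
    if "x \<in> {1..n + n'}" "y \<in> {1..n + n'}" for x y
    using tle_down_opensI[OF T T' that] tle_down_opensD[OF T T' that] by blast
  show ?thesis unfolding tequiv_def a[OF ij] a[OF ij(2,1)] by auto
qed

lemma class_idx_block_sum:
  assumes eq: "\<And>i j. i \<in> {1..n + n'} \<Longrightarrow> j \<in> {1..n + n'} \<Longrightarrow> tequiv C i j \<longleftrightarrow>
      (i \<le> n \<and> j \<le> n \<and> tequiv T i j) \<or> (n < i \<and> n < j \<and> tequiv T' (i - n) (j - n))"
  shows "nclasses (n + n', C) = nclasses (n, T) + nclasses (n', T')"
    and "\<And>i. i \<in> {1..n + n'} \<Longrightarrow> class_idx (n + n', C) i =
       (if i \<le> n then class_idx (n, T) i else class_idx (n', T') (i - n) + nclasses (n, T))"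
proof -
  let ?sh = "\<lambda>k::nat. k + n"
  have min_lower: "class_min (n + n', C) i = class_min (n, T) i" if i: "i \<in> {1..n}" for i
  proof -
    have "tclass (n + n', C) i = tclass (n, T) i"
      unfolding tclass_eq using eq[of i] i by auto
    then show ?thesis by (simp add: class_min_def)
  qed
  have min_upper: "class_min (n + n', C) (k + n) = class_min (n', T') k + n" if k: "k \<in> {1..n'}" for k
  proof -
    have "tclass (n + n', C) (k + n) = ?sh ` tclass (n', T') k"
    proof (intro equalityI subsetI)
      fix j assume "j \<in> tclass (n + n', C) (k + n)"
      then have "n < j" "j - n \<in> tclass (n', T') k"
        using eq[of "k + n" j] k by (auto simp: tclass_eq)
      then show "j \<in> ?sh ` tclass (n', T') k"
        by (auto intro: image_eqI[of j _ "j - n"])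
    qed (use eq k in \<open>auto simp: tclass_eq\<close>)
    moreover have "tclass (n', T') k \<noteq> {}"
      using self_in_tclass[OF k] by blast
    ultimately show ?thesis
      unfolding class_min_def by (simp add: finite_tclass mono_Min_commute[symmetric] mono_def)
  qed
  define M where "M = class_min (n, T) ` {1..n}"
  define M' where "M' = class_min (n', T') ` {1..n'}"
  have M: "finite M" "M \<subseteq> {..n}" and M': "finite M'" "M' \<subseteq> {1..}"
    using class_min_in_interval by (fastforce simp: M_def M'_def)+
  have "class_min (n + n', C) ` {1..n} = M"
    unfolding M_def by (rule image_cong[OF refl min_lower])
  moreover have "class_min (n + n', C) ` ?sh ` {1..n'} = ?sh ` M'"
    unfolding M'_def image_image by (rule image_cong[OF refl min_upper])
  ultimately have mins: "class_min (n + n', C) ` {1..n + n'} = M \<union> ?sh ` M'"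
    unfolding interval_add_split image_Un by (simp only:)
  have "M \<inter> ?sh ` M' = {}"
    using M(2) shift_image_gt[OF M'(2)] by fastforce
  then show "nclasses (n + n', C) = nclasses (n, T) + nclasses (n', T')"
    unfolding nclasses_eq_card mins using M M'
    by (simp add: card_Un_disjoint card_image M_def M'_def)
  fix i assume i: "i \<in> {1..n + n'}"
  show "class_idx (n + n', C) i =
      (if i \<le> n then class_idx (n, T) i else class_idx (n', T') (i - n) + nclasses (n, T))"
  proof (cases "i \<le> n")
    case True
    then have "i \<in> {1..n}" using i by simp
    then show ?thesis
      using True rank_in_Un_shift_lower[OF M(2) M'(2)]
      unfolding class_idx_eq_rank mins min_lower[OF \<open>i \<in> {1..n}\<close>] by (simp add: M_def)
  next
    case False
    then have "i - n \<in> {1..n'}" "i = (i - n) + n" using i by auto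
    then show ?thesis
      using False rank_in_Un_shift_upper[OF M M'] min_upper[of "i - n"]
      unfolding class_idx_eq_rank mins nclasses_eq_card by (simp add: M_def M'_def)
  qed
qed

lemma class_idx_image_Un_shift:
  assumes eq: "\<And>i j. i \<in> {1..n + n'} \<Longrightarrow> j \<in> {1..n + n'} \<Longrightarrow> tequiv C i j \<longleftrightarrow>
      (i \<le> n \<and> j \<le> n \<and> tequiv T i j) \<or> (n < i \<and> n < j \<and> tequiv T' (i - n) (j - n))"
    and U: "U \<subseteq> {1..n}" "U' \<subseteq> {1..n'}"
  shows "class_idx (n + n', C) ` (U \<union> (\<lambda>k. k + n) ` U')
    = class_idx (n, T) ` U \<union> (\<lambda>k. k + nclasses (n, T)) ` class_idx (n', T') ` U'"
proof -
  note idx = class_idx_block_sum(2)[OF eq]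
  have "class_idx (n + n', C) ` U = class_idx (n, T) ` U"
    by (rule image_cong[OF refl]) (use idx U(1) in auto)
  moreover have "class_idx (n + n', C) ` (\<lambda>k. k + n) ` U' = (\<lambda>k. k + nclasses (n, T)) ` class_idx (n', T') ` U'"
    unfolding image_image by (rule image_cong[OF refl]) (use idx U(2) in auto)
  ultimately show ?thesis
    by (simp only: image_Un)
qed

lemma image_conc_opens:
  assumes "\<And>U U'. U \<in> T \<Longrightarrow> U' \<in> T' \<Longrightarrow> g ` (U \<union> (\<lambda>k. k + n) ` U') = h U \<union> (\<lambda>k. k + m) ` h' U'"
  shows "(`) g ` conc_opens n T T' = conc_opens m (h ` T) (h' ` T')"
proof (intro equalityI subsetI)
  fix V assume "V \<in> (`) g ` conc_opens n T T'"
  then obtain U U' where U: "U \<in> T" "U' \<in> T'" and V: "V = g ` (U \<union> (\<lambda>k. k + n) ` U')"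
    by auto
  have "V = h U \<union> (\<lambda>k. k + m) ` h' U'"
    using V assms[OF U] by (simp only:)
  then show "V \<in> conc_opens m (h ` T) (h' ` T')"
    using Un_shift_in_conc_opens[OF imageI[OF U(1)] imageI[OF U(2)]] by (simp only:)
next
  fix V assume "V \<in> conc_opens m (h ` T) (h' ` T')"
  then obtain U U' where U: "U \<in> T" "U' \<in> T'" and V: "V = h U \<union> (\<lambda>k. k + m) ` h' U'"
    by auto
  have "V = g ` (U \<union> (\<lambda>k. k + n) ` U')"
    using V assms[OF U] by (simp only:)
  then show "V \<in> (`) g ` conc_opens n T T'"
    by (rule rev_image_eqI[OF Un_shift_in_conc_opens[OF U]])
qed

lemma image_down_opens:
  assumes "\<And>U. U \<in> T \<Longrightarrow> g ` (U \<union> (\<lambda>k. k + n) ` {1..n'}) = h U \<union> (\<lambda>k. k + m) ` {1..m'}"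
    and "\<And>U'. U' \<in> T' \<Longrightarrow> g ` (\<lambda>k. k + n) ` U' = (\<lambda>k. k + m) ` h' U'"
  shows "(`) g ` down_opens n n' T T' = down_opens m m' (h ` T) (h' ` T')"
proof -
  have "(\<lambda>U. g ` (U \<union> (\<lambda>k. k + n) ` {1..n'})) ` T = (\<lambda>U. h U \<union> (\<lambda>k. k + m) ` {1..m'}) ` T"
    by (rule image_cong[OF refl assms(1)])
  moreover have "(\<lambda>U'. g ` (\<lambda>k. k + n) ` U') ` T' = (\<lambda>U'. (\<lambda>k. k + m) ` h' U') ` T'"
    by (rule image_cong[OF refl assms(2)])
  ultimately show ?thesis
    by (simp only: image_Un image_comp comp_def)
qed

lemma cdef_block_sum:
  assumes "nclasses (n + n', C) = nclasses (n, T) + nclasses (n', T')"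
  shows "cdef (n + n', C) = cdef (n, T) + cdef (n', T')"
  using assms nclasses_le[of n T] nclasses_le[of n' T'] by (simp add: cdef_def)

lemma bar_conc_top:
  assumes T: "is_top n T" and T': "is_top n' T'"
  shows "bar_top (conc_top (n, T) (n', T')) = conc_top (bar_top (n, T)) (bar_top (n', T'))"
    and "cdef (conc_top (n, T) (n', T')) = cdef (n, T) + cdef (n', T')"
proof -
  note eq = tequiv_conc_opens_iff[OF T T']
  have "(`) (class_idx (n + n', conc_opens n T T')) ` conc_opens n T T'
      = conc_opens (nclasses (n, T)) ((`) (class_idx (n, T)) ` T) ((`) (class_idx (n', T')) ` T')"
    by (rule image_conc_opens)
      (rule class_idx_image_Un_shift[OF eq open_subset[OF T] open_subset[OF T']])
  then show "bar_top (conc_top (n, T) (n', T')) = conc_top (bar_top (n, T)) (bar_top (n', T'))"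
    unfolding conc_top_eq bar_top_eq_image[OF is_top_conc[OF T T']] bar_top_eq_image[OF T]
      bar_top_eq_image[OF T'] using class_idx_block_sum(1)[OF eq] by simp
  show "cdef (conc_top (n, T) (n', T')) = cdef (n, T) + cdef (n', T')"
    unfolding conc_top_eq by (rule cdef_block_sum[OF class_idx_block_sum(1)[OF eq]])
qed

lemma bar_down_top:
  assumes T: "is_top n T" and T': "is_top n' T'"
  shows "bar_top (down_top (n, T) (n', T')) = down_top (bar_top (n, T)) (bar_top (n', T'))"
    and "cdef (down_top (n, T) (n', T')) = cdef (n, T) + cdef (n', T')"
proof -
  note eq = tequiv_down_opens_iff[OF T T']
  have "(`) (class_idx (n + n', down_opens n n' T T')) ` down_opens n n' T T'
      = down_opens (nclasses (n, T)) (nclasses (n', T'))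
          ((`) (class_idx (n, T)) ` T) ((`) (class_idx (n', T')) ` T')"
  proof (rule image_down_opens)
    fix U assume "U \<in> T"
    then show "class_idx (n + n', down_opens n n' T T') ` (U \<union> (\<lambda>k. k + n) ` {1..n'})
        = class_idx (n, T) ` U \<union> (\<lambda>k. k + nclasses (n, T)) ` {1..nclasses (n', T')}"
      using class_idx_image_Un_shift[OF eq open_subset[OF T] order_refl] class_idx_image[of n' T']
      by (simp only:)
  next
    fix U' assume "U' \<in> T'"
    then show "class_idx (n + n', down_opens n n' T T') ` (\<lambda>k. k + n) ` U'
        = (\<lambda>k. k + nclasses (n, T)) ` class_idx (n', T') ` U'"
      using class_idx_image_Un_shift[OF eq empty_subsetI open_subset[OF T']] by simp
  qed
  then show "bar_top (down_top (n, T) (n', T')) = down_top (bar_top (n, T)) (bar_top (n', T'))"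
    unfolding down_top_eq bar_top_eq_image[OF is_top_down[OF T T']] bar_top_eq_image[OF T]
      bar_top_eq_image[OF T'] using class_idx_block_sum(1)[OF eq] by simp
  show "cdef (down_top (n, T) (n', T')) = cdef (n, T) + cdef (n', T')"
    unfolding down_top_eq by (rule cdef_block_sum[OF class_idx_block_sum(1)[OF eq]])
qed

section \<open>Standardized restrictions\<close>

abbreviation restr_opens :: "nat set \<Rightarrow> nat set set \<Rightarrow> nat set set" where
  "restr_opens Y T \<equiv> (\<lambda>W. rank_in Y ` (W \<inter> Y)) ` T"

lemma std_restr_eq: "std_restr T Y = (card Y, restr_opens Y T)"
  by (auto simp: std_restr_def)

lemma is_top_std_restr:
  assumes T: "is_top n T" and Y: "Y \<subseteq> {1..n}"
  shows "is_top (card Y) (restr_opens Y T)"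
proof -
  have fin: "finite Y"
    using Y finite_subset by blast
  note R = rank_in_image[OF fin]
  show ?thesis
  proof (rule is_topI)
    show "restr_opens Y T \<subseteq> Pow {1..card Y}"
    proof
      fix V assume "V \<in> restr_opens Y T"
      then have "V \<subseteq> rank_in Y ` Y" by blast
      then show "V \<in> Pow {1..card Y}" using R by simp
    qed
    show "{} \<in> restr_opens Y T"
      by (rule rev_image_eqI[OF is_topD(2)[OF T]]) simp
    show "{1..card Y} \<in> restr_opens Y T"
      by (rule rev_image_eqI[OF is_topD(3)[OF T]]) (use R Y in \<open>simp add: Int_absorb1\<close>)
  next
    fix A B assume "A \<in> restr_opens Y T" "B \<in> restr_opens Y T"
    then obtain W1 W2 where W: "W1 \<in> T" "W2 \<in> T"
      and AB: "A = rank_in Y ` (W1 \<inter> Y)" "B = rank_in Y ` (W2 \<inter> Y)"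
      by blast
    have "A \<union> B = rank_in Y ` ((W1 \<union> W2) \<inter> Y)"
      unfolding AB by (simp add: Int_Un_distrib2 image_Un)
    then show "A \<union> B \<in> restr_opens Y T"
      using is_topD(4)[OF T W] by blast
    have "A \<inter> B = rank_in Y ` ((W1 \<inter> Y) \<inter> (W2 \<inter> Y))"
      unfolding AB by (rule inj_on_image_Int[OF inj_on_rank_in[OF fin], symmetric]) auto
    also have "(W1 \<inter> Y) \<inter> (W2 \<inter> Y) = (W1 \<inter> W2) \<inter> Y"
      by blast
    finally show "A \<inter> B \<in> restr_opens Y T"
      using is_topD(5)[OF T W] by blast
  qed
qed

lemma tle_trace_iff:
  assumes "x \<in> Y" "y \<in> Y"
  shows "tle ((\<lambda>W. W \<inter> Y) ` T) x y \<longleftrightarrow> tle T x y"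
proof
  assume le: "tle ((\<lambda>W. W \<inter> Y) ` T) x y"
  show "tle T x y" unfolding tle_def
  proof (intro ballI impI)
    fix U assume "U \<in> T" "x \<in> U"
    then have "U \<inter> Y \<in> (\<lambda>W. W \<inter> Y) ` T" "x \<in> U \<inter> Y" using assms(1) by auto
    then show "y \<in> U" using le unfolding tle_def by blast
  qed
next
  assume le: "tle T x y"
  show "tle ((\<lambda>W. W \<inter> Y) ` T) x y" unfolding tle_def
  proof (intro ballI impI)
    fix V assume V: "V \<in> (\<lambda>W. W \<inter> Y) ` T" "x \<in> V"
    then obtain W where "W \<in> T" "V = W \<inter> Y" by blast
    then show "y \<in> V" using le V(2) assms(2) unfolding tle_def by blast
  qed
qed

lemma tle_std_restr_iff:
  assumes Y: "Y \<subseteq> {1..n}" and xy: "x \<in> Y" "y \<in> Y"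
  shows "tle (restr_opens Y T) (rank_in Y x) (rank_in Y y) \<longleftrightarrow> tle T x y"
proof -
  have inj: "inj_on (rank_in Y) Y"
    using Y finite_subset inj_on_rank_in by blast
  have "restr_opens Y T = (`) (rank_in Y) ` ((\<lambda>W. W \<inter> Y) ` T)"
    by (simp add: image_image)
  also have "tle \<dots> (rank_in Y x) (rank_in Y y) \<longleftrightarrow> tle ((\<lambda>W. W \<inter> Y) ` T) x y"
    by (rule tle_image_iff[OF _ xy]) (use inj in \<open>auto dest: inj_onD\<close>)
  finally show ?thesis
    using tle_trace_iff[OF xy] by simp
qed

lemma rank_in_rank_in_image:
  assumes "finite M" "Z \<subseteq> M" "z \<in> Z"
  shows "rank_in (rank_in M ` Z) (rank_in M z) = rank_in Z z"
proof (rule rank_in_image_strict_mono)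
  show "finite Z" "z \<in> Z"
    using assms finite_subset by auto
  fix x y assume "x \<in> Z" "y \<in> Z" "x < y"
  then show "rank_in M x < rank_in M y"
    using rank_in_strict_mono[OF assms(1)] assms(2) by blast
qed

lemma tclass_std_restr:
  assumes Y: "Y \<subseteq> {1..n}" "saturated T Y" and y: "y \<in> Y"
  shows "tclass (card Y, restr_opens Y T) (rank_in Y y) = rank_in Y ` tclass (n, T) y"
proof (intro equalityI subsetI)
  have R: "rank_in Y ` Y = {1..card Y}"
    using Y(1) finite_subset rank_in_image by blast
  have teq: "tequiv (restr_opens Y T) (rank_in Y y) (rank_in Y z) \<longleftrightarrow> tequiv T y z" if "z \<in> Y" for z
    unfolding tequiv_def using tle_std_restr_iff[OF Y(1) y that] tle_std_restr_iff[OF Y(1) that y] by simp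
  {
    fix j assume "j \<in> tclass (card Y, restr_opens Y T) (rank_in Y y)"
    then have j: "j \<in> rank_in Y ` Y" "tequiv (restr_opens Y T) (rank_in Y y) j"
      using R by (simp_all add: tclass_eq)
    then obtain z where z: "z \<in> Y" "j = rank_in Y z"
      by blast
    then have "z \<in> tclass (n, T) y"
      using teq[OF z(1)] j(2) Y(1) by (auto simp: tclass_eq)
    then show "j \<in> rank_in Y ` tclass (n, T) y"
      using z(2) by blast
  next
    fix j assume "j \<in> rank_in Y ` tclass (n, T) y"
    then obtain z where z: "z \<in> {1..n}" "tequiv T y z" "j = rank_in Y z"
      by (auto simp: tclass_eq)
    then have "z \<in> Y"
      using Y(2) y unfolding saturated_def by blast
    then show "j \<in> tclass (card Y, restr_opens Y T) (rank_in Y y)"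
      using teq z(2,3) R by (auto simp: tclass_eq)
  }
qed

lemma std_restr_classes:
  assumes Y: "Y \<subseteq> {1..n}" "saturated T Y"
  shows "nclasses (std_restr T Y) = card (class_min (n, T) ` Y)"
    and "\<And>y. y \<in> Y \<Longrightarrow> class_idx (std_restr T Y) (rank_in Y y) = rank_in (class_min (n, T) ` Y) (class_min (n, T) y)"
proof -
  let ?r = "rank_in Y" and ?S = "restr_opens Y T"
  have fin: "finite Y"
    using Y(1) finite_subset by blast
  have mins: "class_min (n, T) ` Y \<subseteq> Y"
    by (rule class_min_image_subset[OF Y])
  have min_eq: "class_min (card Y, ?S) (?r y) = ?r (class_min (n, T) y)" if y: "y \<in> Y" for y
  proof -
    have "tclass (n, T) y \<noteq> {}"
      using self_in_tclass[of y n T] y Y(1) by blast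
    then show ?thesis
      unfolding class_min_def tclass_std_restr[OF Y y]
      by (rule mono_Min_commute[symmetric, OF rank_in_mono[OF fin] finite_tclass])
  qed
  have "class_min (card Y, ?S) ` {1..card Y} = class_min (card Y, ?S) ` ?r ` Y"
    by (simp add: rank_in_image[OF fin])
  also have "\<dots> = ?r ` class_min (n, T) ` Y"
    unfolding image_image by (rule image_cong[OF refl min_eq])
  finally have all_mins: "class_min (card Y, ?S) ` {1..card Y} = ?r ` class_min (n, T) ` Y" .
  show "nclasses (std_restr T Y) = card (class_min (n, T) ` Y)"
    unfolding std_restr_eq nclasses_eq_card all_mins
    by (rule card_image[OF inj_on_subset[OF inj_on_rank_in[OF fin] mins]])
  fix y assume y: "y \<in> Y"
  show "class_idx (std_restr T Y) (?r y) = rank_in (class_min (n, T) ` Y) (class_min (n, T) y)"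
    unfolding std_restr_eq class_idx_eq_rank all_mins min_eq[OF y]
    using rank_in_rank_in_image[OF fin mins] y by simp
qed

lemma rank_class_idx_image:
  assumes Y: "Y \<subseteq> {1..n}"
  shows "\<And>y. y \<in> Y \<Longrightarrow> rank_in (class_idx (n, T) ` Y) (class_idx (n, T) y)
      = rank_in (class_min (n, T) ` Y) (class_min (n, T) y)"
    and "card (class_idx (n, T) ` Y) = card (class_min (n, T) ` Y)"
proof -
  let ?M = "class_min (n, T) ` {1..n}"
  have sub: "class_min (n, T) ` Y \<subseteq> ?M"
    using Y by blast
  have img: "class_idx (n, T) ` Y = rank_in ?M ` class_min (n, T) ` Y"
    unfolding class_idx_eq_rank image_image ..
  show "rank_in (class_idx (n, T) ` Y) (class_idx (n, T) y)
      = rank_in (class_min (n, T) ` Y) (class_min (n, T) y)" if "y \<in> Y" for y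
    unfolding img class_idx_eq_rank using rank_in_rank_in_image[OF _ sub] that by simp
  show "card (class_idx (n, T) ` Y) = card (class_min (n, T) ` Y)"
    unfolding img by (rule card_image[OF inj_on_subset[OF inj_on_rank_in sub]]) simp
qed

text \<open>Both sides of the identity are computed on the class minima of the points of Y.\<close>

lemma bar_std_restr:
  assumes T: "is_top n T" and Y: "Y \<subseteq> {1..n}" "saturated T Y"
  shows "bar_top (std_restr T Y) = std_restr ((`) (class_idx (n, T)) ` T) (class_idx (n, T) ` Y)"
proof -
  let ?f = "class_idx (n, T)"
  let ?h = "\<lambda>y. rank_in (class_min (n, T) ` Y) (class_min (n, T) y)"
  have "(`) (class_idx (std_restr T Y)) ` restr_opens Y T = (\<lambda>W. ?h ` (W \<inter> Y)) ` T"
    unfolding image_image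
    by (intro image_cong refl) (use std_restr_classes(2)[OF Y] in auto)
  moreover have "restr_opens (?f ` Y) ((`) ?f ` T) = (\<lambda>W. ?h ` (W \<inter> Y)) ` T"
    unfolding image_image
  proof (rule image_cong[OF refl])
    fix W assume W: "W \<in> T"
    have "?f ` W \<inter> ?f ` Y = ?f ` (W \<inter> Y)"
      by (rule class_idx_image_Int[OF open_subset[OF T W] Y(1) open_saturated[OF W], symmetric])
    also have "rank_in (?f ` Y) ` \<dots> = ?h ` (W \<inter> Y)"
      unfolding image_image by (rule image_cong[OF refl rank_class_idx_image(1)[OF Y(1)]]) blast
    finally show "rank_in (?f ` Y) ` (?f ` W \<inter> ?f ` Y) = ?h ` (W \<inter> Y)" .
  qed
  moreover have "card (?f ` Y) = nclasses (std_restr T Y)"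
    using rank_class_idx_image(2)[OF Y(1)] std_restr_classes(1)[OF Y] by simp
  ultimately show ?thesis
    unfolding std_restr_eq[of T Y] bar_top_eq_image[OF is_top_std_restr[OF T Y(1)]]
      std_restr_eq[of "(`) ?f ` T"] std_restr_classes(1)[OF Y]
    by simp
qed

lemma cdef_std_restr_add:
  assumes T: "is_top n T" and U: "U \<in> T"
  shows "cdef (n, T) = cdef (std_restr T ({1..n} - U)) + cdef (std_restr T U)"
proof -
  let ?g = "class_min (n, T)"
  have Us: "U \<subseteq> {1..n}" "saturated T U"
    using open_subset[OF T U] open_saturated[OF U] .
  have Cs: "{1..n} - U \<subseteq> {1..n}" "saturated T ({1..n} - U)"
    using closed_saturated[OF T U] by auto
  have fin: "finite U" "finite ({1..n} - U)"
    using Us(1) finite_subset by auto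
  have "card ({1..n} - U) + card U = n"
    using card_Diff_subset[OF fin(1) Us(1)] card_mono[OF _ Us(1)] by simp
  moreover have "?g ` ({1..n} - U) \<inter> ?g ` U = {}"
    using class_min_image_subset[OF Cs] class_min_image_subset[OF Us] by blast
  then have "nclasses (n, T) = card (?g ` ({1..n} - U)) + card (?g ` U)"
    unfolding nclasses_eq_card using Us(1) fin by (simp add: card_Un_disjoint[symmetric] Un_Diff_cancel2 image_Un[symmetric] Un_absorb2)
  moreover have "card (?g ` ({1..n} - U)) \<le> card ({1..n} - U)" "card (?g ` U) \<le> card U"
    using card_image_le fin by blast+
  ultimately show ?thesis
    unfolding cdef_def std_restr_classes(1)[OF Cs] std_restr_classes(1)[OF Us]
    by (simp add: std_restr_eq)
qed

text \<open>On a basis element, the two tensor factors of each term of the coproduct are restrictions to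
  saturated sets, so the quotient commutes with them and the defects add up.\<close>

lemma coprod_basis_bar_top:
  fixes q :: "'k::field"
  assumes "a \<in> topologies"
  shows "coprod_basis (bar_top a) (c * q ^ cdef a) = theta2 q (coprod_basis a c)"
proof -
  obtain n T where a: "a = (n, T)"
    by (cases a)
  have T: "is_top n T"
    using topologiesD[OF assms] a by simp
  let ?f = "class_idx (n, T)"
  let ?G = "\<lambda>p c. Poly_Mapping.single (bar_top (fst p), bar_top (snd p)) (c * (q ^ cdef (fst p) * q ^ cdef (snd p)))"
  have term_eq: "Poly_Mapping.single (std_restr ((`) ?f ` T) ({1..nclasses (n, T)} - ?f ` U),
        std_restr ((`) ?f ` T) (?f ` U)) (c * q ^ cdef (n, T))
      = ?G (std_restr T ({1..n} - U), std_restr T U) c" if U: "U \<in> T" for U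
  proof -
    have "std_restr ((`) ?f ` T) (?f ` U) = bar_top (std_restr T U)"
      using bar_std_restr[OF T open_subset[OF T U] open_saturated[OF U]] by simp
    moreover have "std_restr ((`) ?f ` T) ({1..nclasses (n, T)} - ?f ` U) = bar_top (std_restr T ({1..n} - U))"
      using bar_std_restr[OF T _ closed_saturated[OF T U]]
      unfolding class_idx_image_Diff[OF open_subset[OF T U] open_saturated[OF U], symmetric] by simp
    ultimately show ?thesis
      unfolding cdef_std_restr_add[OF T U] by (simp add: power_add)
  qed
  have "coprod_basis (bar_top a) (c * q ^ cdef a)
      = (\<Sum>V\<in>(`) ?f ` T. Poly_Mapping.single (std_restr ((`) ?f ` T) ({1..nclasses (n, T)} - V),
          std_restr ((`) ?f ` T) V) (c * q ^ cdef (n, T)))"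
    unfolding coprod_basis_def a bar_top_eq_image[OF T] by simp
  also have "\<dots> = (\<Sum>U\<in>T. Poly_Mapping.single (std_restr ((`) ?f ` T) ({1..nclasses (n, T)} - ?f ` U),
          std_restr ((`) ?f ` T) (?f ` U)) (c * q ^ cdef (n, T)))"
    by (rule sum.reindex[OF inj_on_image_class_idx[OF T], unfolded comp_def])
  also have "\<dots> = (\<Sum>U\<in>T. ?G (std_restr T ({1..n} - U), std_restr T U) c)"
    by (rule sum.cong[OF refl term_eq])
  also have "\<dots> = theta2 q (coprod_basis a c)"
    unfolding theta2_eq_lin_ext coprod_basis_def a
    by (simp add: lin_ext_sum[OF coeff_additive_single_scaled] lin_ext_single[OF coeff_additive_single_scaled])
  finally show ?thesis .
qed

section \<open>The map theta\<close>

lemma bar_top_in_T0_topologies: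
  assumes "a \<in> topologies"
  shows "bar_top a \<in> T0_topologies"
proof -
  obtain n T where a: "a = (n, T)" by (cases a)
  have T: "is_top n T"
    using topologiesD[OF assms] a by simp
  have "bar_top (n, T) \<in> topologies"
    using is_top_class_idx_image[OF T] by (simp add: bar_top_eq_image[OF T] topologies_def)
  then show ?thesis
    using is_T0_bar_top[OF T] a by (simp add: T0_topologies_def)
qed

lemma bar_top_T0_topologies:
  assumes "a \<in> T0_topologies"
  shows "bar_top a = a" "cdef a = 0"
  using assms bar_top_of_T0 by (auto simp: T0_topologies_def topologies_def)

lemma theta_in_H_SP:
  assumes "x \<in> H_T"
  shows "theta q x \<in> H_SP"
proof -
  have "Poly_Mapping.keys (theta q x) \<subseteq> (\<Union>a\<in>Poly_Mapping.keys x.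
      Poly_Mapping.keys (Poly_Mapping.single (bar_top a) (Poly_Mapping.lookup x a * q ^ cdef a)))"
    unfolding theta_def by (rule keys_sum)
  also have "\<dots> \<subseteq> bar_top ` Poly_Mapping.keys x"
    by auto
  also have "\<dots> \<subseteq> T0_topologies"
    using assms bar_top_in_T0_topologies by (auto simp: H_T_def)
  finally show ?thesis
    by (simp add: H_SP_def)
qed

lemma theta_H_SP:
  assumes "x \<in> H_SP"
  shows "theta q x = x"
proof -
  have "a \<in> T0_topologies" if "a \<in> Poly_Mapping.keys x" for a
    using assms that by (auto simp: H_SP_def)
  then have "theta q x = (\<Sum>a\<in>Poly_Mapping.keys x. Poly_Mapping.single a (Poly_Mapping.lookup x a))"
    unfolding theta_def by (intro sum.cong refl) (simp add: bar_top_T0_topologies)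
  then show ?thesis
    by (simp add: sum_single_lookup)
qed

lemma H_SP_subset_H_T: "H_SP \<subseteq> H_T"
  by (auto simp: H_SP_def H_T_def T0_topologies_def)

lemma one_T_in_H_SP: "one_T \<in> H_SP"
proof -
  have "(0, {{}}) \<in> T0_topologies"
    by (simp add: T0_topologies_def topologies_def is_top_def is_T0_def)
  then show ?thesis
    by (simp add: H_SP_def one_T_def)
qed

lemma theta_bilin:
  fixes q :: "'k::field"
  assumes hom: "\<And>a b. a \<in> topologies \<Longrightarrow> b \<in> topologies \<Longrightarrow>
      bar_top (h a b) = h (bar_top a) (bar_top b) \<and> cdef (h a b) = cdef a + cdef b"
    and x: "x \<in> H_T" and y: "y \<in> H_T"
  shows "theta q (bilin h x y) = bilin h (theta q x) (theta q y)"
proof -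
  note lin = lin_ext_sum[OF coeff_additive_single_scaled] lin_ext_single[OF coeff_additive_single_scaled]
  have "theta q (bilin h x y) = (\<Sum>a\<in>Poly_Mapping.keys x. \<Sum>b\<in>Poly_Mapping.keys y.
      Poly_Mapping.single (bar_top (h a b)) (Poly_Mapping.lookup x a * Poly_Mapping.lookup y b * q ^ cdef (h a b)))"
    unfolding theta_eq_lin_ext bilin_def lin ..
  also have "\<dots> = (\<Sum>a\<in>Poly_Mapping.keys x. \<Sum>b\<in>Poly_Mapping.keys y.
      bilin h (Poly_Mapping.single (bar_top a) (Poly_Mapping.lookup x a * q ^ cdef a))
              (Poly_Mapping.single (bar_top b) (Poly_Mapping.lookup y b * q ^ cdef b)))"
  proof (intro sum.cong refl)
    fix a b assume "a \<in> Poly_Mapping.keys x" "b \<in> Poly_Mapping.keys y"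
    then have "a \<in> topologies" "b \<in> topologies"
      using x y by (auto simp: H_T_def)
    then show "Poly_Mapping.single (bar_top (h a b)) (Poly_Mapping.lookup x a * Poly_Mapping.lookup y b * q ^ cdef (h a b))
      = bilin h (Poly_Mapping.single (bar_top a) (Poly_Mapping.lookup x a * q ^ cdef a))
              (Poly_Mapping.single (bar_top b) (Poly_Mapping.lookup y b * q ^ cdef b))"
      unfolding bilin_single using hom by (simp add: power_add ac_simps)
  qed
  also have "\<dots> = bilin h (theta q x) (theta q y)"
    unfolding theta_def bilin_sum_left bilin_sum_right by (rule sum.swap)
  finally show ?thesis .
qed

lemma bar_conc_top_hom:
  "a \<in> topologies \<Longrightarrow> b \<in> topologies \<Longrightarrow>
    bar_top (conc_top a b) = conc_top (bar_top a) (bar_top b) \<and> cdef (conc_top a b) = cdef a + cdef b"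
  using bar_conc_top[of "fst a" "snd a" "fst b" "snd b"] topologiesD by (cases a, cases b) auto

lemma bar_down_top_hom:
  "a \<in> topologies \<Longrightarrow> b \<in> topologies \<Longrightarrow>
    bar_top (down_top a b) = down_top (bar_top a) (bar_top b) \<and> cdef (down_top a b) = cdef a + cdef b"
  using bar_down_top[of "fst a" "snd a" "fst b" "snd b"] topologiesD by (cases a, cases b) auto

lemma coprod_theta:
  fixes q :: "'k::field"
  assumes x: "x \<in> H_T"
  shows "coprod (theta q x) = theta2 q (coprod x)"
proof -
  have "coprod (theta q x)
      = (\<Sum>a\<in>Poly_Mapping.keys x. coprod_basis (bar_top a) (Poly_Mapping.lookup x a * q ^ cdef a))"
    unfolding coprod_eq_lin_ext theta_def lin_ext_sum[OF coeff_additive_coprod_basis]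
      lin_ext_single[OF coeff_additive_coprod_basis] ..
  also have "\<dots> = (\<Sum>a\<in>Poly_Mapping.keys x. theta2 q (coprod_basis a (Poly_Mapping.lookup x a)))"
    using x by (intro sum.cong refl coprod_basis_bar_top) (auto simp: H_T_def)
  also have "\<dots> = theta2 q (coprod x)"
    unfolding coprod_eq_lin_ext lin_ext_def[of coprod_basis x] theta2_eq_lin_ext
      lin_ext_sum[OF coeff_additive_single_scaled] ..
  finally show ?thesis .
qed

theorem proposition8:
  fixes q :: "'k::field"
  shows "(\<forall>x \<in> H_T. theta q x \<in> H_SP)
    \<and> theta q ` H_T = (H_SP :: (topo \<Rightarrow>\<^sub>0 'k) set)
    \<and> theta q one_T = one_T
    \<and> (\<forall>x \<in> H_T. \<forall>y \<in> H_T. theta q (conc_prod x y) = conc_prod (theta q x) (theta q y))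
    \<and> (\<forall>x \<in> H_T. \<forall>y \<in> H_T. theta q (down_prod x y) = down_prod (theta q x) (theta q y))
    \<and> (\<forall>x \<in> H_T. coprod (theta q x) = theta2 q (coprod x))"
proof (intro conjI ballI)
  show "theta q x \<in> H_SP" if "x \<in> H_T" for x
    using theta_in_H_SP[OF that] .
  have "x \<in> theta q ` H_T" if "x \<in> H_SP" for x :: "topo \<Rightarrow>\<^sub>0 'k"
    by (rule rev_image_eqI[where f = "theta q", OF subsetD[OF H_SP_subset_H_T that] theta_H_SP[OF that, symmetric]])
  then show "theta q ` H_T = (H_SP :: (topo \<Rightarrow>\<^sub>0 'k) set)"
    using theta_in_H_SP by auto
  show "theta q one_T = one_T"
    by (rule theta_H_SP[OF one_T_in_H_SP])
  show "theta q (conc_prod x y) = conc_prod (theta q x) (theta q y)" if "x \<in> H_T" "y \<in> H_T" for x y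
    unfolding conc_prod_def by (rule theta_bilin[OF bar_conc_top_hom that])
  show "theta q (down_prod x y) = down_prod (theta q x) (theta q y)" if "x \<in> H_T" "y \<in> H_T" for x y
    unfolding down_prod_def by (rule theta_bilin[OF bar_down_top_hom that])
  show "coprod (theta q x) = theta2 q (coprod x)" if "x \<in> H_T" for x
    by (rule coprod_theta[OF that])
qed

end
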